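(* Let $K$ be an arbitrary field, $P=K[t][[x_1,\dots,x_s]]$, and $M$ a finitely generated $P$-module. For $t_0\in K$ put $M(t_0):=M\otimes_{K[t]}K[t]/\langle t-t_0\rangle\cong M/\langle t-t_0\rangle M$. Then for every $o\in K$ there is a Zariski open neighborhood $U\subset\mathbb A^1_K=K$ of $o$ such that $\dim_K M(t_0)\le\dim_K M(o)$ for all $t_0\in U$.
   Context: $K[t][[x_1,\dots,x_s]]$ denotes formal power series in $x_1,\dots,x_s$ with coefficients in the polynomial ring $K[t]$. Dimensions may be infinite (the statement is vacuous when $\dim_K M(o)=\infty$). *)

theory Defs
  imports "HOL-Algebra.Module" "HOL-Computational_Algebra.Polynomial" "HOL-Library.Extended_Nat"
begin

text \<open>Elements of P = K[t][[x_1,...,x_s]]: functions from exponent vectors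
  (nat => nat, supported in {0..<s}) to coefficients in K[t] = 'k poly,
  vanishing on exponent vectors involving variables x_i with i >= s.\<close>

definition expvecs :: "nat \<Rightarrow> (nat \<Rightarrow> nat) set" where
  "expvecs s = {\<alpha>. \<forall>i\<ge>s. \<alpha> i = 0}"

definition ps_carrier :: "nat \<Rightarrow> ((nat \<Rightarrow> nat) \<Rightarrow> 'k::field poly) set" where
  "ps_carrier s = {f. \<forall>\<alpha>. \<alpha> \<notin> expvecs s \<longrightarrow> f \<alpha> = 0}"

definition ps_mult :: "nat \<Rightarrow> ((nat \<Rightarrow> nat) \<Rightarrow> 'k::field poly) \<Rightarrow> ((nat \<Rightarrow> nat) \<Rightarrow> 'k poly)
    \<Rightarrow> ((nat \<Rightarrow> nat) \<Rightarrow> 'k poly)" where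
  "ps_mult s f g = (\<lambda>\<alpha>. if \<alpha> \<in> expvecs s
      then (\<Sum>\<beta>\<in>{\<beta>. \<forall>i. \<beta> i \<le> \<alpha> i}. f \<beta> * g (\<lambda>i. \<alpha> i - \<beta> i)) else 0)"

definition PS :: "nat \<Rightarrow> ((nat \<Rightarrow> nat) \<Rightarrow> 'k::field poly) ring" where
  "PS s = \<lparr> carrier = ps_carrier s,
            monoid.mult = ps_mult s,
            monoid.one = (\<lambda>\<alpha>. if \<alpha> = (\<lambda>_. 0) then 1 else 0),
            ring.zero = (\<lambda>_. 0),
            ring.add = (\<lambda>f g \<alpha>. f \<alpha> + g \<alpha>) \<rparr>"

definition ps_const :: "'k::field \<Rightarrow> ((nat \<Rightarrow> nat) \<Rightarrow> 'k poly)" where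
  "ps_const c = (\<lambda>\<alpha>. if \<alpha> = (\<lambda>_. 0) then [:c:] else 0)"

definition ps_t_minus :: "'k::field \<Rightarrow> ((nat \<Rightarrow> nat) \<Rightarrow> 'k poly)" where
  "ps_t_minus t0 = (\<lambda>\<alpha>. if \<alpha> = (\<lambda>_. 0) then [:-t0, 1:] else 0)"

definition fin_gen_module ::
  "nat \<Rightarrow> (((nat \<Rightarrow> nat) \<Rightarrow> 'k::field poly), 'm) module \<Rightarrow> bool" where
  "fin_gen_module s M \<longleftrightarrow> (\<exists>A. finite A \<and> A \<subseteq> carrier M \<and>
     (\<forall>m\<in>carrier M. \<exists>c \<in> A \<rightarrow> carrier (PS s).
        m = finsum M (\<lambda>a. c a \<odot>\<^bsub>M\<^esub> a) A))"

text \<open>The submodule <t - t0> M (the ideal is principal, so it is {(t - t0) m}).\<close>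
definition tsub :: "(((nat \<Rightarrow> nat) \<Rightarrow> 'k::field poly), 'm) module \<Rightarrow> 'k \<Rightarrow> 'm set" where
  "tsub M t0 = {ps_t_minus t0 \<odot>\<^bsub>M\<^esub> m | m. m \<in> carrier M}"

text \<open>B spans M(t0) = M / <t - t0> M over K (K acting through constants in P).\<close>
definition spans_fiber ::
  "(((nat \<Rightarrow> nat) \<Rightarrow> 'k::field poly), 'm) module \<Rightarrow> 'k \<Rightarrow> 'm set \<Rightarrow> bool" where
  "spans_fiber M t0 B \<longleftrightarrow> finite B \<and> B \<subseteq> carrier M \<and>
     (\<forall>m\<in>carrier M. \<exists>c :: 'm \<Rightarrow> 'k.
        m \<ominus>\<^bsub>M\<^esub> finsum M (\<lambda>b. ps_const (c b) \<odot>\<^bsub>M\<^esub> b) B \<in> tsub M t0)"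

text \<open>dim_K M(t0): the minimal size of a finite K-spanning set of M(t0)
  (equal to the vector space dimension), and infinity if there is none.\<close>
definition fiber_dim ::
  "(((nat \<Rightarrow> nat) \<Rightarrow> 'k::field poly), 'm) module \<Rightarrow> 'k \<Rightarrow> enat" where
  "fiber_dim M t0 = (if \<exists>B. spans_fiber M t0 B
     then enat (LEAST n. \<exists>B. spans_fiber M t0 B \<and> card B = n) else \<infinity>)"

definition zariski_open_A1 :: "'k::field set \<Rightarrow> bool" where
  "zariski_open_A1 U \<longleftrightarrow> (\<exists>S :: 'k poly set. U = - {x. \<forall>p\<in>S. poly p x = 0})"

end

theory Submission
  imports Defs "HOL-Algebra.AbelCoset" "Jordan_Normal_Form.Determinant"
begin

(* Let m = <x_1, ..., x_s> be the ideal of the variables and suppose B spans the fiber M(o) with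
   |B| = n.  Modulo m^(n+1) M, the module M is spanned over K[t] by the finitely many generators E
   of m^k M, k <= n, and B lets us pick S within E, |S| <= n, spanning E over K modulo
   m^(n+1) M + (t - o) M.  Writing the remaining generators in this way, with the (t - o)-part
   again expanded over E, yields a K[t]-linear system with matrix I - (t - o) Q.  Its determinant
   D has D(o) = 1, and wherever D(t0) <> 0 the relations evaluated at t0 show that S spans M over K
   modulo m^(n+1) M + (t - t0) M.  In the descending chain m^k M + (t - t0) M (k <= n + 1) some
   step is then stationary, since |S| <= n; Nakayama's lemma over the power series ring, where
   1 - c is a unit for every c in m, turns this step into m^k M <= (t - t0) M.  Hence S spans
   M(t0), so dim M(t0) <= n on the Zariski open set {D <> 0}. *)

lemma homogeneous_system_nontrivial_solution:
  fixes v :: "'i \<Rightarrow> 's \<Rightarrow> 'k::field"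
  assumes "finite S" "finite I" "card S < card I"
  shows "\<exists>l. (\<exists>i\<in>I. l i \<noteq> 0) \<and> (\<forall>x\<in>S. (\<Sum>i\<in>I. l i * v i x) = 0)"
  using assms
proof (induction S arbitrary: I v rule: finite_induct)
  case empty
  then have "I \<noteq> {}" by auto
  then obtain i where "i \<in> I" by blast
  then show ?case by (intro exI[of _ "\<lambda>_. 1"]) auto
next
  case (insert x S)
  show ?case
  proof (cases "\<forall>i\<in>I. v i x = 0")
    case True
    have "card S < card I" using insert by simp
    then obtain l where l: "\<exists>i\<in>I. l i \<noteq> 0" "\<forall>y\<in>S. (\<Sum>i\<in>I. l i * v i y) = 0"
      using insert.IH[OF insert.prems(1)] by blast
    then show ?thesis using True by (intro exI[of _ l]) auto
  next
    case False
    \<comment> \<open>Gaussian elimination of the unknown \<open>i0\<close> by means of the equation \<open>x\<close>.\<close>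
    then obtain i0 where i0: "i0 \<in> I" "v i0 x \<noteq> 0" by blast
    define I' where "I' = I - {i0}"
    define w where "w = (\<lambda>i y. v i y - (v i x / v i0 x) * v i0 y)"
    have "finite I'" using insert.prems by (simp add: I'_def)
    moreover have "card I' = card I - 1" using i0 insert.prems by (simp add: I'_def)
    then have "card S < card I'" using insert by simp
    ultimately obtain m where m: "\<exists>i\<in>I'. m i \<noteq> 0" "\<forall>y\<in>S. (\<Sum>i\<in>I'. m i * w i y) = 0"
      using insert.IH[of I' w] by blast
    define l where "l = (\<lambda>i. if i = i0 then - (\<Sum>j\<in>I'. m j * v j x) / v i0 x else m i)"
    have sum_I: "(\<Sum>i\<in>I. l i * v i y) = l i0 * v i0 y + (\<Sum>j\<in>I'. m j * v j y)" for y
    proof -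
      have "I = insert i0 I'" "i0 \<notin> I'" using i0 by (auto simp: I'_def)
      then have "(\<Sum>i\<in>I. l i * v i y) = l i0 * v i0 y + (\<Sum>j\<in>I'. l j * v j y)"
        using \<open>finite I'\<close> by simp
      also have "(\<Sum>j\<in>I'. l j * v j y) = (\<Sum>j\<in>I'. m j * v j y)"
        by (rule sum.cong) (auto simp: l_def I'_def)
      finally show ?thesis .
    qed
    have "(\<Sum>i\<in>I. l i * v i y) = 0" if y: "y \<in> insert x S" for y
    proof (cases "y = x")
      case True
      then show ?thesis unfolding sum_I using i0(2) by (simp add: l_def)
    next
      case False
      then have "y \<in> S" using y by simp
      have "(\<Sum>j\<in>I'. m j * w j y) = (\<Sum>j\<in>I'. m j * v j y) - (\<Sum>j\<in>I'. m j * v j x) / v i0 x * v i0 y"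
        by (simp add: w_def algebra_simps sum_subtractf sum_distrib_left sum_distrib_right sum_divide_distrib)
      then show ?thesis
        unfolding sum_I using m(2) \<open>y \<in> S\<close> i0(2) by (simp add: l_def)
    qed
    moreover have "\<exists>i\<in>I. l i \<noteq> 0"
    proof -
      obtain j where j: "j \<in> I'" "m j \<noteq> 0" using m(1) by blast
      then have "j \<in> I" "l j = m j" by (auto simp: I'_def l_def)
      then show ?thesis using j(2) by (intro bexI[of _ j]) auto
    qed
    ultimately show ?thesis by blast
  qed
qed

lemma inj_on_strict_chain_witnesses:
  fixes Z :: "nat \<Rightarrow> 'a set"
  assumes dec: "\<And>j. Z (Suc j) \<subseteq> Z j" and y: "\<And>k. k \<le> n \<Longrightarrow> y k \<in> Z k \<and> y k \<notin> Z (Suc k)"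
  shows "inj_on y {..n}"
proof (rule inj_onI)
  have neq: "y a \<noteq> y b" if "a < b" "b \<le> n" for a b
  proof -
    have "Z b \<subseteq> Z (Suc a)" using that(1) by (intro lift_Suc_antimono_le[of Z, OF dec]) simp
    then have "y b \<in> Z (Suc a)" using y[OF that(2)] by blast
    then show ?thesis using y[of a] that by auto
  qed
  fix a b assume "a \<in> {..n}" "b \<in> {..n}" "y a = y b"
  then show "a = b" using neq[of a b] neq[of b a] by (cases a b rule: linorder_cases) auto
qed

section \<open>The power series ring\<close>

abbreviation exp0 :: "nat \<Rightarrow> nat" where "exp0 \<equiv> (\<lambda>_. 0)"

lemma exp0_in_expvecs [simp]: "exp0 \<in> expvecs s"
  by (simp add: expvecs_def)

lemma finite_exps_below:
  assumes "\<alpha> \<in> expvecs s"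
  shows "finite {\<beta>. \<forall>i. \<beta> i \<le> \<alpha> i}"
proof -
  let ?F = "(\<lambda>f i. if i < s then f i else 0) ` (PiE {..<s} (\<lambda>i. {..\<alpha> i}))"
  have "{\<beta>. \<forall>i. \<beta> i \<le> \<alpha> i} \<subseteq> ?F"
  proof
    fix \<beta> assume \<beta>: "\<beta> \<in> {\<beta>. \<forall>i. \<beta> i \<le> \<alpha> i}"
    then have "\<beta> = (\<lambda>i. if i < s then restrict \<beta> {..<s} i else 0)"
      using assms by (auto simp: expvecs_def fun_eq_iff) (metis le_zero_eq not_less)
    moreover have "restrict \<beta> {..<s} \<in> PiE {..<s} (\<lambda>i. {..\<alpha> i})" using \<beta> by auto
    ultimately show "\<beta> \<in> ?F" by blast
  qed
  moreover have "finite ?F" by (intro finite_imageI finite_PiE) auto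
  ultimately show ?thesis by (rule finite_subset)
qed

lemma exp_degree_diff_less:
  assumes "\<alpha> \<in> expvecs s" "\<forall>i. \<beta> i \<le> \<alpha> i" "\<beta> \<noteq> exp0"
  shows "(\<Sum>i<s. \<alpha> i - \<beta> i) < (\<Sum>i<s. \<alpha> i)"
proof -
  obtain j where j: "\<beta> j \<noteq> 0" using assms(3) by auto
  have "\<alpha> j - \<beta> j < \<alpha> j" using j assms(2)[rule_format, of j] by linarith
  moreover have "j < s"
  proof (rule ccontr)
    assume "\<not> j < s"
    then have "\<alpha> j = 0" using assms(1) by (simp add: expvecs_def)
    then show False using assms(2) j by (metis le_zero_eq)
  qed
  ultimately show ?thesis by (intro sum_strict_mono_ex1) auto
qed

text \<open>The inverse of \<open>1 - c\<close> for \<open>c\<close> without constant term, by the recursion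
  \<open>u = 1 + c u\<close> on the total degree of the exponent.\<close>

function ps_inverse_one_minus ::
  "nat \<Rightarrow> ((nat \<Rightarrow> nat) \<Rightarrow> 'k::field poly) \<Rightarrow> (nat \<Rightarrow> nat) \<Rightarrow> 'k poly" where
  "ps_inverse_one_minus s c \<alpha> = (if \<alpha> \<notin> expvecs s then 0 else if \<alpha> = exp0 then 1 else
     (\<Sum>\<beta>\<in>{\<beta>. (\<forall>i. \<beta> i \<le> \<alpha> i) \<and> \<beta> \<noteq> exp0}. c \<beta> * ps_inverse_one_minus s c (\<lambda>i. \<alpha> i - \<beta> i)))"
  by auto
termination
proof (relation "measure (\<lambda>(s, c, \<alpha>). \<Sum>i<s. \<alpha> i)")
  fix s c \<alpha> \<beta>
  assume "\<not> \<alpha> \<notin> expvecs s" "\<alpha> \<noteq> exp0" "\<beta> \<in> {\<beta>. (\<forall>i. \<beta> i \<le> \<alpha> i) \<and> \<beta> \<noteq> exp0}"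
  then have "(\<Sum>i<s. \<alpha> i - \<beta> i) < (\<Sum>i<s. \<alpha> i)"
    by (intro exp_degree_diff_less) auto
  then show "((s, c, \<lambda>i. \<alpha> i - \<beta> i), s, c, \<alpha>) \<in> measure (\<lambda>(s, c, \<alpha>). \<Sum>i<s. \<alpha> i)"
    by (simp only: in_measure prod.case)
qed simp

declare ps_inverse_one_minus.simps [simp del]

definition ps_poly :: "'k::field poly \<Rightarrow> ((nat \<Rightarrow> nat) \<Rightarrow> 'k poly)" where
  "ps_poly p = (\<lambda>\<alpha>. if \<alpha> = exp0 then p else 0)"

definition unit_exp :: "nat \<Rightarrow> nat \<Rightarrow> nat" where
  "unit_exp i = (\<lambda>j. if j = i then 1 else 0)"

definition ps_var :: "nat \<Rightarrow> ((nat \<Rightarrow> nat) \<Rightarrow> 'k::field poly)" where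
  "ps_var i = (\<lambda>\<alpha>. if \<alpha> = unit_exp i then 1 else 0)"

text \<open>\<open>ps_var i * ps_div_var s p i\<close> collects the monomials of \<open>p\<close> whose first variable
  is \<open>x\<^sub>i\<close>, so that \<open>p = p(0) + \<Sum>\<^sub>i x\<^sub>i * ps_div_var s p i\<close>.\<close>

definition ps_div_var ::
  "nat \<Rightarrow> ((nat \<Rightarrow> nat) \<Rightarrow> 'k::field poly) \<Rightarrow> nat \<Rightarrow> ((nat \<Rightarrow> nat) \<Rightarrow> 'k poly)" where
  "ps_div_var s p i =
     (\<lambda>\<alpha>. if \<alpha> \<in> expvecs s \<and> (\<forall>j<i. \<alpha> j = 0) then p (\<lambda>j. \<alpha> j + unit_exp i j) else 0)"

lemma PS_simps:
  "carrier (PS s) = ps_carrier s"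
  "monoid.mult (PS s) = ps_mult s"
  "monoid.one (PS s) = ps_poly 1"
  "ring.zero (PS s) = (\<lambda>_. 0)"
  "ring.add (PS s) = (\<lambda>f g \<alpha>. f \<alpha> + g \<alpha>)"
  by (auto simp: PS_def ps_poly_def fun_eq_iff)

lemma ps_const_eq: "ps_const c = ps_poly [:c:]"
  by (simp add: ps_const_def ps_poly_def)

lemma ps_t_minus_eq: "ps_t_minus c = ps_poly [:-c, 1:]"
  by (simp add: ps_t_minus_def ps_poly_def)

lemma ps_poly_in_ps_carrier [simp]: "ps_poly p \<in> ps_carrier s"
  by (simp add: ps_poly_def ps_carrier_def)

lemma ps_var_in_ps_carrier: "i < s \<Longrightarrow> ps_var i \<in> ps_carrier s"
  by (auto simp: ps_var_def ps_carrier_def expvecs_def unit_exp_def)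

lemma ps_div_var_in_ps_carrier [simp]: "ps_div_var s p i \<in> ps_carrier s"
  by (simp add: ps_div_var_def ps_carrier_def)

lemma ps_inverse_one_minus_in_ps_carrier [simp]: "ps_inverse_one_minus s c \<in> ps_carrier s"
  by (simp add: ps_carrier_def ps_inverse_one_minus.simps[of s c])

lemma ps_inverse_one_minus_exp0: "ps_inverse_one_minus s c exp0 = 1"
  by (subst ps_inverse_one_minus.simps) simp

lemma ps_mult_monomial_left:
  assumes "\<And>\<beta>. \<beta> \<noteq> \<gamma> \<Longrightarrow> f \<beta> = 0"
  shows "ps_mult s f g \<alpha> =
    (if \<alpha> \<in> expvecs s \<and> (\<forall>i. \<gamma> i \<le> \<alpha> i) then f \<gamma> * g (\<lambda>i. \<alpha> i - \<gamma> i) else 0)"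
proof (cases "\<alpha> \<in> expvecs s")
  case True
  have "(\<Sum>\<beta>\<in>{\<beta>. \<forall>i. \<beta> i \<le> \<alpha> i}. f \<beta> * g (\<lambda>i. \<alpha> i - \<beta> i))
      = (\<Sum>\<beta>\<in>{\<beta>. \<forall>i. \<beta> i \<le> \<alpha> i}. if \<beta> = \<gamma> then f \<gamma> * g (\<lambda>i. \<alpha> i - \<gamma> i) else 0)"
    by (rule sum.cong) (auto simp: assms)
  also have "\<dots> = (if \<forall>i. \<gamma> i \<le> \<alpha> i then f \<gamma> * g (\<lambda>i. \<alpha> i - \<gamma> i) else 0)"
    using finite_exps_below[OF True] by (simp add: sum.delta')
  finally show ?thesis using True by (simp add: ps_mult_def)
qed (simp add: ps_mult_def)

lemma ps_mult_ps_poly: "ps_mult s (ps_poly p) (ps_poly q) = ps_poly (p * q)"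
  by (rule ext, subst ps_mult_monomial_left[where \<gamma> = exp0]) (auto simp: ps_poly_def)

lemma ps_mult_at_exp0: "ps_mult s f g exp0 = f exp0 * g exp0"
proof -
  have "{\<beta>. \<forall>i. \<beta> i \<le> (0::nat)} = {exp0}" by (auto simp: fun_eq_iff)
  then show ?thesis by (simp add: ps_mult_def)
qed

lemma ps_mult_one_minus_inverse:
  assumes "c exp0 = 0"
  shows "ps_mult s (\<lambda>\<alpha>. ps_poly 1 \<alpha> - c \<alpha>) (ps_inverse_one_minus s c) = ps_poly 1"
proof
  fix \<alpha>
  let ?u = "ps_inverse_one_minus s c"
  let ?L = "{\<beta>. \<forall>i. \<beta> i \<le> \<alpha> i}" and ?L' = "{\<beta>. (\<forall>i. \<beta> i \<le> \<alpha> i) \<and> \<beta> \<noteq> exp0}"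
  show "ps_mult s (\<lambda>\<alpha>. ps_poly 1 \<alpha> - c \<alpha>) ?u \<alpha> = ps_poly 1 \<alpha>"
  proof (cases "\<alpha> \<in> expvecs s")
    case False
    then have "\<alpha> \<noteq> exp0" by auto
    with False show ?thesis by (simp add: ps_mult_def ps_poly_def)
  next
    case True
    have fin: "finite ?L" by (rule finite_exps_below[OF True])
    have "(\<Sum>\<beta>\<in>?L. ps_poly 1 \<beta> * ?u (\<lambda>i. \<alpha> i - \<beta> i)) = (\<Sum>\<beta>\<in>?L. if \<beta> = exp0 then ?u \<alpha> else 0)"
      by (rule sum.cong) (auto simp: ps_poly_def)
    also have "\<dots> = ?u \<alpha>" using fin by (simp add: sum.delta')
    finally have one: "(\<Sum>\<beta>\<in>?L. ps_poly 1 \<beta> * ?u (\<lambda>i. \<alpha> i - \<beta> i)) = ?u \<alpha>" .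
    have "?L = insert exp0 ?L'" by auto
    moreover have "finite ?L'" by (rule finite_subset[OF _ fin]) auto
    ultimately have c: "(\<Sum>\<beta>\<in>?L. c \<beta> * ?u (\<lambda>i. \<alpha> i - \<beta> i)) = (\<Sum>\<beta>\<in>?L'. c \<beta> * ?u (\<lambda>i. \<alpha> i - \<beta> i))"
      using assms by simp
    have "ps_mult s (\<lambda>\<alpha>. ps_poly 1 \<alpha> - c \<alpha>) ?u \<alpha>
        = (\<Sum>\<beta>\<in>?L. ps_poly 1 \<beta> * ?u (\<lambda>i. \<alpha> i - \<beta> i)) - (\<Sum>\<beta>\<in>?L. c \<beta> * ?u (\<lambda>i. \<alpha> i - \<beta> i))"
      using True by (simp add: ps_mult_def left_diff_distrib sum_subtractf)
    also have "\<dots> = ?u \<alpha> - (\<Sum>\<beta>\<in>?L'. c \<beta> * ?u (\<lambda>i. \<alpha> i - \<beta> i))"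
      by (simp only: one c)
    finally have eq: "ps_mult s (\<lambda>\<alpha>. ps_poly 1 \<alpha> - c \<alpha>) ?u \<alpha> = ?u \<alpha> - (\<Sum>\<beta>\<in>?L'. c \<beta> * ?u (\<lambda>i. \<alpha> i - \<beta> i))" .
    show ?thesis
    proof (cases "\<alpha> = exp0")
      case True
      have "?L' = {}" using True by (auto simp: fun_eq_iff)
      then have "ps_mult s (\<lambda>\<alpha>. ps_poly 1 \<alpha> - c \<alpha>) ?u \<alpha> = 1"
        using eq True by (simp only: sum.empty diff_zero ps_inverse_one_minus_exp0)
      moreover have "ps_poly 1 \<alpha> = 1" using True by (simp add: ps_poly_def)
      ultimately show ?thesis by simp
    next
      case False
      then have "?u \<alpha> = (\<Sum>\<beta>\<in>?L'. c \<beta> * ?u (\<lambda>i. \<alpha> i - \<beta> i))"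
        using True by (subst ps_inverse_one_minus.simps) simp
      then have "ps_mult s (\<lambda>\<alpha>. ps_poly 1 \<alpha> - c \<alpha>) ?u \<alpha> = 0"
        using eq by (simp only: diff_self)
      moreover have "ps_poly 1 \<alpha> = 0" using False by (simp add: ps_poly_def)
      ultimately show ?thesis by simp
    qed
  qed
qed

lemma ps_mult_var_div_var:
  "ps_mult s (ps_var i) (ps_div_var s p i) \<alpha> =
     (if \<alpha> \<in> expvecs s \<and> 1 \<le> \<alpha> i \<and> (\<forall>j<i. \<alpha> j = 0) then p \<alpha> else 0)"
proof -
  have "ps_mult s (ps_var i) (ps_div_var s p i) \<alpha> =
     (if \<alpha> \<in> expvecs s \<and> (\<forall>j. unit_exp i j \<le> \<alpha> j)
      then ps_var i (unit_exp i) * ps_div_var s p i (\<lambda>j. \<alpha> j - unit_exp i j) else 0)"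
    by (rule ps_mult_monomial_left) (simp add: ps_var_def)
  also have "\<dots> = (if \<alpha> \<in> expvecs s \<and> 1 \<le> \<alpha> i \<and> (\<forall>j<i. \<alpha> j = 0) then p \<alpha> else 0)"
  proof (cases "\<alpha> \<in> expvecs s \<and> 1 \<le> \<alpha> i")
    case True
    have "\<forall>j. unit_exp i j \<le> \<alpha> j" using True by (simp add: unit_exp_def)
    moreover have "(\<lambda>j. \<alpha> j - unit_exp i j) \<in> expvecs s" using True by (simp add: expvecs_def)
    moreover have "(\<lambda>j'. \<alpha> j' - unit_exp i j' + unit_exp i j') = \<alpha>"
      using True by (auto simp: unit_exp_def fun_eq_iff)
    moreover have "(\<forall>j<i. \<alpha> j - unit_exp i j = 0) = (\<forall>j<i. \<alpha> j = 0)" by (auto simp: unit_exp_def)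
    ultimately show ?thesis using True by (auto simp add: ps_var_def ps_div_var_def)
  next
    case False
    have "\<not> (\<forall>j. unit_exp i j \<le> \<alpha> j)" if "\<alpha> \<in> expvecs s"
      using False that spec[of "\<lambda>j. unit_exp i j \<le> \<alpha> j" i] by (simp add: unit_exp_def)
    then show ?thesis using False by auto
  qed
  finally show ?thesis .
qed

lemma ps_decomposition_apply:
  assumes "p \<in> ps_carrier s"
  shows "p \<alpha> = ps_poly (p exp0) \<alpha> + (\<Sum>i<s. ps_mult s (ps_var i) (ps_div_var s p i) \<alpha>)"
proof (cases "\<alpha> \<in> expvecs s \<and> \<alpha> \<noteq> exp0")
  case True
  then obtain k where k: "\<alpha> k \<noteq> 0" by (auto simp: fun_eq_iff)
  define i0 where "i0 = (LEAST i. \<alpha> i \<noteq> 0)"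
  have i0: "\<alpha> i0 \<noteq> 0" unfolding i0_def by (rule LeastI[of _ k]) (rule k)
  have below_i0: "\<alpha> j = 0" if "j < i0" for j
    using not_less_Least[OF that[unfolded i0_def]] by simp
  have "i0 < s" using True i0 by (auto simp: expvecs_def)
  have first_var: "(1 \<le> \<alpha> i \<and> (\<forall>j<i. \<alpha> j = 0)) \<longleftrightarrow> i = i0" for i
  proof
    assume i: "1 \<le> \<alpha> i \<and> (\<forall>j<i. \<alpha> j = 0)"
    have "\<not> i < i0"
    proof
      assume "i < i0"
      then have "\<alpha> i = 0" by (rule below_i0)
      with i show False by simp
    qed
    moreover have "\<not> i0 < i"
    proof
      assume "i0 < i"
      then have "\<alpha> i0 = 0" using i by simp
      with i0 show False by simp
    qed
    ultimately show "i = i0" by simp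
  next
    assume "i = i0"
    then show "1 \<le> \<alpha> i \<and> (\<forall>j<i. \<alpha> j = 0)" using i0 below_i0 by auto
  qed
  have "(\<Sum>i<s. ps_mult s (ps_var i) (ps_div_var s p i) \<alpha>) = (\<Sum>i<s. if i = i0 then p \<alpha> else 0)"
    using True by (intro sum.cong) (simp_all only: ps_mult_var_div_var first_var simp_thms)
  also have "\<dots> = p \<alpha>" using \<open>i0 < s\<close> by simp
  finally show ?thesis using True by (simp add: ps_poly_def)
next
  case False
  then consider "\<alpha> = exp0" | "\<alpha> \<notin> expvecs s" "\<alpha> \<noteq> exp0" by blast
  then show ?thesis
    by cases (use assms in \<open>simp_all add: ps_poly_def ps_mult_var_div_var ps_carrier_def\<close>)
qed

locale ps_module = Module.module "PS s" M
  for s :: nat and M :: "(((nat \<Rightarrow> nat) \<Rightarrow> 'k::field poly), 'm) module"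
begin

abbreviation P :: "((nat \<Rightarrow> nat) \<Rightarrow> 'k poly) ring" where "P \<equiv> PS s"

abbreviation K_scalars :: "((nat \<Rightarrow> nat) \<Rightarrow> 'k poly) set" where "K_scalars \<equiv> range ps_const"
abbreviation Kt_scalars :: "((nat \<Rightarrow> nat) \<Rightarrow> 'k poly) set" where "Kt_scalars \<equiv> range ps_poly"

definition var_ideal :: "((nat \<Rightarrow> nat) \<Rightarrow> 'k poly) set" where
  "var_ideal = {c \<in> carrier P. c exp0 = 0}"

lemma ps_poly_in_carrier [simp]: "ps_poly p \<in> carrier P"
  and ps_const_in_carrier [simp]: "ps_const c \<in> carrier P"
  and ps_t_minus_in_carrier [simp]: "ps_t_minus c \<in> carrier P"
  by (simp_all add: PS_simps ps_const_eq ps_t_minus_eq)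

lemma K_scalars_subset [simp]: "K_scalars \<subseteq> carrier P"
  and Kt_scalars_subset [simp]: "Kt_scalars \<subseteq> carrier P"
  by auto

lemma ps_var_in_carrier: "i < s \<Longrightarrow> ps_var i \<in> carrier P"
  by (simp add: PS_simps ps_var_in_ps_carrier)

lemma ps_poly_mult: "ps_poly p \<otimes>\<^bsub>P\<^esub> ps_poly q = ps_poly (p * q)"
  by (simp add: PS_simps ps_mult_ps_poly)

lemma ps_poly_add: "ps_poly p \<oplus>\<^bsub>P\<^esub> ps_poly q = ps_poly (p + q)"
  by (simp add: PS_simps ps_poly_def fun_eq_iff)

lemma ps_poly_zero: "ps_poly 0 = \<zero>\<^bsub>P\<^esub>"
  by (simp add: PS_simps ps_poly_def fun_eq_iff)

lemma ps_poly_one: "ps_poly 1 = \<one>\<^bsub>P\<^esub>"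
  by (simp add: PS_simps)

lemma a_inv_P: "a \<in> carrier P \<Longrightarrow> \<ominus>\<^bsub>P\<^esub> a = (\<lambda>\<alpha>. - a \<alpha>)"
  by (rule R.minus_equality) (auto simp: PS_simps ps_carrier_def)

lemma ps_poly_uminus: "ps_poly (- p) = \<ominus>\<^bsub>P\<^esub> ps_poly p"
  unfolding a_inv_P[OF ps_poly_in_carrier] by (simp add: ps_poly_def fun_eq_iff)

lemma ps_const_add: "ps_const a \<oplus>\<^bsub>P\<^esub> ps_const b = ps_const (a + b)"
  by (simp add: ps_const_eq ps_poly_add)

lemma ps_const_zero: "ps_const 0 = \<zero>\<^bsub>P\<^esub>"
  by (simp add: ps_const_eq ps_poly_zero)

lemma ps_poly_smult_add:
  "x \<in> carrier M \<Longrightarrow> ps_poly p \<odot>\<^bsub>M\<^esub> x \<oplus>\<^bsub>M\<^esub> ps_poly q \<odot>\<^bsub>M\<^esub> x = ps_poly (p + q) \<odot>\<^bsub>M\<^esub> x"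
  by (simp add: smult_l_distr[symmetric] ps_poly_add)

lemma ps_poly_smult_smult:
  "x \<in> carrier M \<Longrightarrow> ps_poly p \<odot>\<^bsub>M\<^esub> (ps_poly q \<odot>\<^bsub>M\<^esub> x) = ps_poly (p * q) \<odot>\<^bsub>M\<^esub> x"
  by (simp add: smult_assoc1[symmetric] ps_poly_mult)

lemma ps_poly_smult_zero: "x \<in> carrier M \<Longrightarrow> ps_poly 0 \<odot>\<^bsub>M\<^esub> x = \<zero>\<^bsub>M\<^esub>"
  by (simp add: ps_poly_zero)

lemma ps_poly_smult_one: "x \<in> carrier M \<Longrightarrow> ps_poly 1 \<odot>\<^bsub>M\<^esub> x = x"
  by (simp add: ps_poly_one)

lemma ps_poly_smult_uminus: "x \<in> carrier M \<Longrightarrow> ps_poly (- p) \<odot>\<^bsub>M\<^esub> x = \<ominus>\<^bsub>M\<^esub> (ps_poly p \<odot>\<^bsub>M\<^esub> x)"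
  by (simp add: ps_poly_uminus smult_l_minus)

lemma ps_const_smult_add:
  "x \<in> carrier M \<Longrightarrow> ps_const a \<odot>\<^bsub>M\<^esub> x \<oplus>\<^bsub>M\<^esub> ps_const b \<odot>\<^bsub>M\<^esub> x = ps_const (a + b) \<odot>\<^bsub>M\<^esub> x"
  by (simp add: ps_const_eq ps_poly_smult_add)

lemma ps_const_smult_smult:
  "x \<in> carrier M \<Longrightarrow> ps_const a \<odot>\<^bsub>M\<^esub> (ps_const b \<odot>\<^bsub>M\<^esub> x) = ps_const (a * b) \<odot>\<^bsub>M\<^esub> x"
  by (simp add: ps_const_eq ps_poly_smult_smult mult.commute)

lemma ps_const_smult_zero: "x \<in> carrier M \<Longrightarrow> ps_const 0 \<odot>\<^bsub>M\<^esub> x = \<zero>\<^bsub>M\<^esub>"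
  by (simp add: ps_const_eq ps_poly_smult_zero)

lemma ps_const_smult_one: "x \<in> carrier M \<Longrightarrow> ps_const 1 \<odot>\<^bsub>M\<^esub> x = x"
  by (simp add: ps_const_eq pCons_one ps_poly_smult_one)

lemma ps_const_smult_minus_one: "x \<in> carrier M \<Longrightarrow> ps_const (- 1) \<odot>\<^bsub>M\<^esub> x = \<ominus>\<^bsub>M\<^esub> x"
proof -
  have "[:- 1:] = - (1 :: 'k poly)" by (simp flip: pCons_one)
  then show "x \<in> carrier M \<Longrightarrow> ?thesis"
    by (simp add: ps_const_eq ps_poly_smult_uminus ps_poly_smult_one)
qed

lemma finsum_P_apply:
  assumes "finite I" "f \<in> I \<rightarrow> carrier P"
  shows "finsum P f I = (\<lambda>\<alpha>. \<Sum>i\<in>I. f i \<alpha>)"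
  using assms
proof (induction I rule: finite_induct)
  case (insert x F)
  then have "finsum P f (insert x F) = f x \<oplus>\<^bsub>P\<^esub> finsum P f F"
    by (intro R.finsum_insert) auto
  then show ?case using insert by (simp add: PS_simps)
qed (simp add: PS_simps)

lemma ps_decomposition:
  assumes "p \<in> carrier P"
  shows "p = ps_poly (p exp0) \<oplus>\<^bsub>P\<^esub> (\<Oplus>\<^bsub>P\<^esub>i\<in>{..<s}. ps_var i \<otimes>\<^bsub>P\<^esub> ps_div_var s p i)"
proof
  fix \<alpha>
  have "ps_div_var s p i \<in> carrier P" for i by (simp add: PS_simps)
  then have summands: "(\<lambda>i. ps_var i \<otimes>\<^bsub>P\<^esub> ps_div_var s p i) \<in> {..<s} \<rightarrow> carrier P"
    using ps_var_in_carrier by auto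
  have "p \<alpha> = ps_poly (p exp0) \<alpha> + (\<Sum>i<s. ps_mult s (ps_var i) (ps_div_var s p i) \<alpha>)"
    using assms by (intro ps_decomposition_apply) (simp add: PS_simps)
  also have "\<dots> = (ps_poly (p exp0) \<oplus>\<^bsub>P\<^esub> (\<Oplus>\<^bsub>P\<^esub>i\<in>{..<s}. ps_var i \<otimes>\<^bsub>P\<^esub> ps_div_var s p i)) \<alpha>"
    unfolding finsum_P_apply[OF finite_lessThan summands] by (simp add: PS_simps)
  finally show "p \<alpha> = (ps_poly (p exp0) \<oplus>\<^bsub>P\<^esub> (\<Oplus>\<^bsub>P\<^esub>i\<in>{..<s}. ps_var i \<otimes>\<^bsub>P\<^esub> ps_div_var s p i)) \<alpha>" .
qed

lemma one_minus_invertible: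
  assumes "c \<in> carrier P" "c exp0 = 0"
  shows "\<exists>u\<in>carrier P. u \<otimes>\<^bsub>P\<^esub> (\<one>\<^bsub>P\<^esub> \<ominus>\<^bsub>P\<^esub> c) = \<one>\<^bsub>P\<^esub>"
proof
  show u: "ps_inverse_one_minus s c \<in> carrier P" by (simp add: PS_simps)
  have "\<one>\<^bsub>P\<^esub> \<ominus>\<^bsub>P\<^esub> c = (\<lambda>\<alpha>. ps_poly 1 \<alpha> - c \<alpha>)"
    using assms by (simp add: a_minus_def a_inv_P PS_simps)
  then have "(\<one>\<^bsub>P\<^esub> \<ominus>\<^bsub>P\<^esub> c) \<otimes>\<^bsub>P\<^esub> ps_inverse_one_minus s c = \<one>\<^bsub>P\<^esub>"
    using ps_mult_one_minus_inverse[of c s, OF assms(2)] by (simp add: PS_simps)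
  then show "ps_inverse_one_minus s c \<otimes>\<^bsub>P\<^esub> (\<one>\<^bsub>P\<^esub> \<ominus>\<^bsub>P\<^esub> c) = \<one>\<^bsub>P\<^esub>"
    using u assms by (simp add: R.m_comm)
qed

lemma var_ideal_subset: "var_ideal \<subseteq> carrier P"
  by (auto simp: var_ideal_def)

lemma var_ideal_mult: "r \<in> carrier P \<Longrightarrow> c \<in> var_ideal \<Longrightarrow> r \<otimes>\<^bsub>P\<^esub> c \<in> var_ideal"
  using R.m_closed[of r c] by (auto simp: var_ideal_def PS_simps ps_mult_at_exp0)

lemma ps_var_in_var_ideal:
  assumes "i < s"
  shows "ps_var i \<in> var_ideal"
proof -
  have "unit_exp i i \<noteq> exp0 i" by (simp add: unit_exp_def)
  then have "unit_exp i \<noteq> exp0" by metis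
  then show ?thesis using ps_var_in_carrier[OF assms] by (simp add: var_ideal_def ps_var_def)
qed

lemma submonoid_var_ideal: "submonoid var_ideal (add_monoid P)"
  by unfold_locales (auto simp: var_ideal_def ps_carrier_def PS_simps)

lemma submonoid_carrier: "submonoid (carrier P) (add_monoid P)"
  by unfold_locales auto

lemma submonoid_K_scalars: "submonoid K_scalars (add_monoid P)"
  by unfold_locales (auto simp: ps_const_add simp flip: ps_const_zero)

lemma submonoid_Kt_scalars: "submonoid Kt_scalars (add_monoid P)"
  by unfold_locales (auto simp: ps_poly_add ps_poly_zero[symmetric])

definition scalar_closed :: "((nat \<Rightarrow> nat) \<Rightarrow> 'k poly) set \<Rightarrow> 'm set \<Rightarrow> bool" where
  "scalar_closed C W \<longleftrightarrow> W \<subseteq> carrier M \<and> \<zero>\<^bsub>M\<^esub> \<in> W \<and> (\<forall>a\<in>W. \<forall>b\<in>W. a \<oplus>\<^bsub>M\<^esub> b \<in> W)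
     \<and> (\<forall>r\<in>C. \<forall>a\<in>W. r \<odot>\<^bsub>M\<^esub> a \<in> W)"

abbreviation K_subspace :: "'m set \<Rightarrow> bool" where
  "K_subspace \<equiv> scalar_closed K_scalars"

abbreviation P_submodule :: "'m set \<Rightarrow> bool" where
  "P_submodule \<equiv> scalar_closed (carrier P)"

definition lin_span :: "((nat \<Rightarrow> nat) \<Rightarrow> 'k poly) set \<Rightarrow> 'm set \<Rightarrow> 'm set" where
  "lin_span C X = {\<Oplus>\<^bsub>M\<^esub>x\<in>X. c x \<odot>\<^bsub>M\<^esub> x | c. c \<in> X \<rightarrow> C}"

lemma scalar_closedD:
  assumes "scalar_closed C W"
  shows "W \<subseteq> carrier M" "\<zero>\<^bsub>M\<^esub> \<in> W" "\<And>a b. a \<in> W \<Longrightarrow> b \<in> W \<Longrightarrow> a \<oplus>\<^bsub>M\<^esub> b \<in> W"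
    "\<And>r a. r \<in> C \<Longrightarrow> a \<in> W \<Longrightarrow> r \<odot>\<^bsub>M\<^esub> a \<in> W"
  using assms unfolding scalar_closed_def by auto

lemma scalar_closedI:
  assumes "W \<subseteq> carrier M" "\<zero>\<^bsub>M\<^esub> \<in> W" "\<And>a b. a \<in> W \<Longrightarrow> b \<in> W \<Longrightarrow> a \<oplus>\<^bsub>M\<^esub> b \<in> W"
    "\<And>r a. r \<in> C \<Longrightarrow> a \<in> W \<Longrightarrow> r \<odot>\<^bsub>M\<^esub> a \<in> W"
  shows "scalar_closed C W"
  using assms unfolding scalar_closed_def by auto

lemma K_subspace_smult: "K_subspace W \<Longrightarrow> a \<in> W \<Longrightarrow> ps_const c \<odot>\<^bsub>M\<^esub> a \<in> W"
  by (simp add: scalar_closedD(4))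

lemma K_subspace_if_P_submodule: "P_submodule W \<Longrightarrow> K_subspace W"
  unfolding scalar_closed_def by auto

lemma finsum_mem:
  assumes "finite I" "S \<subseteq> carrier M" "\<zero>\<^bsub>M\<^esub> \<in> S" "\<And>a b. a \<in> S \<Longrightarrow> b \<in> S \<Longrightarrow> a \<oplus>\<^bsub>M\<^esub> b \<in> S"
    and "f \<in> I \<rightarrow> S"
  shows "finsum M f I \<in> S"
  using assms(1,5)
proof (induction I rule: finite_induct)
  case (insert x F)
  then have "finsum M f (insert x F) = f x \<oplus>\<^bsub>M\<^esub> finsum M f F"
    using assms(2) by (intro M.finsum_insert) auto
  then show ?case using insert assms(4) by auto
qed (simp add: assms(3))

lemma finsum_eq_zero:
  assumes "finite I" "\<And>x. x \<in> I \<Longrightarrow> f x = \<zero>\<^bsub>M\<^esub>"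
  shows "finsum M f I = \<zero>\<^bsub>M\<^esub>"
  using finsum_mem[of I "{\<zero>\<^bsub>M\<^esub>}" f] assms by auto

lemma scalar_closed_finsum:
  "scalar_closed C W \<Longrightarrow> finite I \<Longrightarrow> f \<in> I \<rightarrow> W \<Longrightarrow> finsum M f I \<in> W"
  by (rule finsum_mem) (auto dest: scalar_closedD)

lemma set_add_memI: "a \<in> A \<Longrightarrow> b \<in> B \<Longrightarrow> a \<oplus>\<^bsub>M\<^esub> b \<in> A <+>\<^bsub>M\<^esub> B"
  unfolding set_add_def' by blast

lemma set_add_memE:
  assumes "y \<in> A <+>\<^bsub>M\<^esub> B"
  obtains a b where "a \<in> A" "b \<in> B" "y = a \<oplus>\<^bsub>M\<^esub> b"
  using assms unfolding set_add_def' by blast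

lemma set_add_mono: "A \<subseteq> A' \<Longrightarrow> B \<subseteq> B' \<Longrightarrow> A <+>\<^bsub>M\<^esub> B \<subseteq> A' <+>\<^bsub>M\<^esub> B'"
  unfolding set_add_def' by blast

lemma set_add_upper_left:
  assumes "A \<subseteq> carrier M" "\<zero>\<^bsub>M\<^esub> \<in> B"
  shows "A \<subseteq> A <+>\<^bsub>M\<^esub> B"
proof
  fix a assume a: "a \<in> A"
  then have "a \<oplus>\<^bsub>M\<^esub> \<zero>\<^bsub>M\<^esub> \<in> A <+>\<^bsub>M\<^esub> B" using assms(2) by (rule set_add_memI)
  then show "a \<in> A <+>\<^bsub>M\<^esub> B" using a assms(1) by auto
qed

lemma set_add_upper_right:
  assumes "B \<subseteq> carrier M" "\<zero>\<^bsub>M\<^esub> \<in> A"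
  shows "B \<subseteq> A <+>\<^bsub>M\<^esub> B"
proof
  fix b assume b: "b \<in> B"
  with assms(2) have "\<zero>\<^bsub>M\<^esub> \<oplus>\<^bsub>M\<^esub> b \<in> A <+>\<^bsub>M\<^esub> B" by (rule set_add_memI)
  then show "b \<in> A <+>\<^bsub>M\<^esub> B" using b assms(1) by auto
qed

lemma set_add_least: "scalar_closed C W \<Longrightarrow> A \<subseteq> W \<Longrightarrow> B \<subseteq> W \<Longrightarrow> A <+>\<^bsub>M\<^esub> B \<subseteq> W"
  by (auto elim!: set_add_memE dest: scalar_closedD(3))

lemma scalar_closed_set_add:
  assumes A: "scalar_closed C A" and B: "scalar_closed C B" and C: "C \<subseteq> carrier P"
  shows "scalar_closed C (A <+>\<^bsub>M\<^esub> B)"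
proof (rule scalar_closedI)
  note A' = scalar_closedD[OF A] and B' = scalar_closedD[OF B]
  show "A <+>\<^bsub>M\<^esub> B \<subseteq> carrier M" using A'(1) B'(1) by (rule M.set_add_closed)
  show "\<zero>\<^bsub>M\<^esub> \<in> A <+>\<^bsub>M\<^esub> B" using set_add_memI[OF A'(2) B'(2)] by simp
  show "x \<oplus>\<^bsub>M\<^esub> y \<in> A <+>\<^bsub>M\<^esub> B" if x: "x \<in> A <+>\<^bsub>M\<^esub> B" and y: "y \<in> A <+>\<^bsub>M\<^esub> B" for x y
  proof -
    obtain a1 b1 where 1: "a1 \<in> A" "b1 \<in> B" "x = a1 \<oplus>\<^bsub>M\<^esub> b1" using x by (rule set_add_memE)
    obtain a2 b2 where 2: "a2 \<in> A" "b2 \<in> B" "y = a2 \<oplus>\<^bsub>M\<^esub> b2" using y by (rule set_add_memE)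
    have "a1 \<in> carrier M" "a2 \<in> carrier M" "b1 \<in> carrier M" "b2 \<in> carrier M"
      using 1 2 A'(1) B'(1) by auto
    then have "x \<oplus>\<^bsub>M\<^esub> y = (a1 \<oplus>\<^bsub>M\<^esub> a2) \<oplus>\<^bsub>M\<^esub> (b1 \<oplus>\<^bsub>M\<^esub> b2)"
      by (simp add: 1(3) 2(3) M.a_ac)
    then show ?thesis using set_add_memI[OF A'(3)[OF 1(1) 2(1)] B'(3)[OF 1(2) 2(2)]] by simp
  qed
  show "r \<odot>\<^bsub>M\<^esub> x \<in> A <+>\<^bsub>M\<^esub> B" if r: "r \<in> C" and x: "x \<in> A <+>\<^bsub>M\<^esub> B" for r x
  proof -
    obtain a b where ab: "a \<in> A" "b \<in> B" "x = a \<oplus>\<^bsub>M\<^esub> b" using x by (rule set_add_memE)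
    then have "r \<odot>\<^bsub>M\<^esub> x = r \<odot>\<^bsub>M\<^esub> a \<oplus>\<^bsub>M\<^esub> r \<odot>\<^bsub>M\<^esub> b"
      using A'(1) B'(1) C r by (auto intro: smult_r_distr)
    then show ?thesis using set_add_memI[OF A'(4)[OF r ab(1)] B'(4)[OF r ab(2)]] by simp
  qed
qed

lemma add_submonoidD:
  assumes "submonoid C (add_monoid P)"
  shows "C \<subseteq> carrier P" "\<zero>\<^bsub>P\<^esub> \<in> C" "\<And>a b. a \<in> C \<Longrightarrow> b \<in> C \<Longrightarrow> a \<oplus>\<^bsub>P\<^esub> b \<in> C"
  using submonoid.subset[OF assms] submonoid.one_closed[OF assms] submonoid.m_closed[OF assms]
  by auto

lemma lin_span_memI: "c \<in> X \<rightarrow> C \<Longrightarrow> (\<Oplus>\<^bsub>M\<^esub>x\<in>X. c x \<odot>\<^bsub>M\<^esub> x) \<in> lin_span C X"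
  unfolding lin_span_def by blast

lemma lin_span_memE:
  assumes "y \<in> lin_span C X"
  obtains c where "c \<in> X \<rightarrow> C" "y = (\<Oplus>\<^bsub>M\<^esub>x\<in>X. c x \<odot>\<^bsub>M\<^esub> x)"
  using assms unfolding lin_span_def by blast

lemma lin_span_least:
  assumes "finite X" "scalar_closed C' W" "\<And>x a. x \<in> X \<Longrightarrow> a \<in> C \<Longrightarrow> a \<odot>\<^bsub>M\<^esub> x \<in> W"
  shows "lin_span C X \<subseteq> W"
proof
  fix y assume "y \<in> lin_span C X"
  then obtain c where c: "c \<in> X \<rightarrow> C" "y = (\<Oplus>\<^bsub>M\<^esub>x\<in>X. c x \<odot>\<^bsub>M\<^esub> x)" by (rule lin_span_memE)
  have "(\<lambda>x. c x \<odot>\<^bsub>M\<^esub> x) \<in> X \<rightarrow> W" using c(1) assms(3) by blast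
  then show "y \<in> W" unfolding c(2) by (rule scalar_closed_finsum[OF assms(2,1)])
qed

lemma smult_mem_lin_span:
  assumes "finite X" "X \<subseteq> carrier M" "submonoid C (add_monoid P)" "x \<in> X" "a \<in> C"
  shows "a \<odot>\<^bsub>M\<^esub> x \<in> lin_span C X"
proof -
  note C = add_submonoidD[OF assms(3)]
  define c where "c = (\<lambda>y. if y = x then a else \<zero>\<^bsub>P\<^esub>)"
  have cC: "c \<in> X \<rightarrow> C" using C assms(5) by (simp add: c_def)
  have X: "X = insert x (X - {x})" using assms(4) by auto
  have "(\<Oplus>\<^bsub>M\<^esub>y\<in>X. c y \<odot>\<^bsub>M\<^esub> y) = c x \<odot>\<^bsub>M\<^esub> x \<oplus>\<^bsub>M\<^esub> (\<Oplus>\<^bsub>M\<^esub>y\<in>X - {x}. c y \<odot>\<^bsub>M\<^esub> y)"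
    using cC C(1) assms(1,2,4) by (subst X, intro M.finsum_insert) auto
  also have "(\<Oplus>\<^bsub>M\<^esub>y\<in>X - {x}. c y \<odot>\<^bsub>M\<^esub> y) = \<zero>\<^bsub>M\<^esub>"
    using assms(1,2) by (intro finsum_eq_zero) (auto simp: c_def)
  moreover have "a \<odot>\<^bsub>M\<^esub> x \<in> carrier M" using assms(2,4,5) C(1) by auto
  ultimately have "(\<Oplus>\<^bsub>M\<^esub>y\<in>X. c y \<odot>\<^bsub>M\<^esub> y) = a \<odot>\<^bsub>M\<^esub> x" by (simp add: c_def)
  then show ?thesis using lin_span_memI[OF cC] by simp
qed

lemma scalar_closed_lin_span:
  assumes "finite X" "X \<subseteq> carrier M" "submonoid C (add_monoid P)" "C' \<subseteq> carrier P"
    and "\<And>r a. r \<in> C' \<Longrightarrow> a \<in> C \<Longrightarrow> r \<otimes>\<^bsub>P\<^esub> a \<in> C"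
  shows "scalar_closed C' (lin_span C X)"
proof (rule scalar_closedI)
  note C = add_submonoidD[OF assms(3)]
  have summands: "(\<lambda>x. c x \<odot>\<^bsub>M\<^esub> x) \<in> X \<rightarrow> carrier M" if "c \<in> X \<rightarrow> C" for c
    using that C(1) assms(2) by blast
  show "lin_span C X \<subseteq> carrier M"
    by (auto elim!: lin_span_memE dest!: summands)
  have "(\<Oplus>\<^bsub>M\<^esub>x\<in>X. \<zero>\<^bsub>P\<^esub> \<odot>\<^bsub>M\<^esub> x) = \<zero>\<^bsub>M\<^esub>"
    using assms(1,2) by (intro finsum_eq_zero) auto
  then show "\<zero>\<^bsub>M\<^esub> \<in> lin_span C X" using lin_span_memI[of "\<lambda>_. \<zero>\<^bsub>P\<^esub>" X C] C(2) by simp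
  show "y1 \<oplus>\<^bsub>M\<^esub> y2 \<in> lin_span C X" if y1: "y1 \<in> lin_span C X" and y2: "y2 \<in> lin_span C X" for y1 y2
  proof -
    obtain c1 where c1: "c1 \<in> X \<rightarrow> C" "y1 = (\<Oplus>\<^bsub>M\<^esub>x\<in>X. c1 x \<odot>\<^bsub>M\<^esub> x)"
      using y1 by (rule lin_span_memE)
    obtain c2 where c2: "c2 \<in> X \<rightarrow> C" "y2 = (\<Oplus>\<^bsub>M\<^esub>x\<in>X. c2 x \<odot>\<^bsub>M\<^esub> x)"
      using y2 by (rule lin_span_memE)
    have "y1 \<oplus>\<^bsub>M\<^esub> y2 = (\<Oplus>\<^bsub>M\<^esub>x\<in>X. c1 x \<odot>\<^bsub>M\<^esub> x \<oplus>\<^bsub>M\<^esub> c2 x \<odot>\<^bsub>M\<^esub> x)"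
      unfolding c1(2) c2(2) using summands[OF c1(1)] summands[OF c2(1)] by (rule M.finsum_addf[symmetric])
    also have "\<dots> = (\<Oplus>\<^bsub>M\<^esub>x\<in>X. (c1 x \<oplus>\<^bsub>P\<^esub> c2 x) \<odot>\<^bsub>M\<^esub> x)"
    proof (intro M.finsum_cong')
      have cP: "c1 x \<in> carrier P" "c2 x \<in> carrier P" "x \<in> carrier M" if "x \<in> X" for x
        using that c1(1) c2(1) C(1) assms(2) by auto
      show "(\<lambda>x. (c1 x \<oplus>\<^bsub>P\<^esub> c2 x) \<odot>\<^bsub>M\<^esub> x) \<in> X \<rightarrow> carrier M" using cP by simp
      show "c1 x \<odot>\<^bsub>M\<^esub> x \<oplus>\<^bsub>M\<^esub> c2 x \<odot>\<^bsub>M\<^esub> x = (c1 x \<oplus>\<^bsub>P\<^esub> c2 x) \<odot>\<^bsub>M\<^esub> x" if "x \<in> X" for x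
        using cP[OF that] by (simp add: smult_l_distr)
    qed simp
    moreover have "(\<lambda>x. c1 x \<oplus>\<^bsub>P\<^esub> c2 x) \<in> X \<rightarrow> C" using c1(1) c2(1) C(3) by blast
    ultimately show ?thesis by (simp add: lin_span_memI)
  qed
  show "r \<odot>\<^bsub>M\<^esub> y \<in> lin_span C X" if r': "r \<in> C'" and y: "y \<in> lin_span C X" for r y
  proof -
    obtain c where c: "c \<in> X \<rightarrow> C" "y = (\<Oplus>\<^bsub>M\<^esub>x\<in>X. c x \<odot>\<^bsub>M\<^esub> x)"
      using y by (rule lin_span_memE)
    have r: "r \<in> carrier P" using r' assms(4) by blast
    have "r \<odot>\<^bsub>M\<^esub> y = (\<Oplus>\<^bsub>M\<^esub>x\<in>X. r \<odot>\<^bsub>M\<^esub> (c x \<odot>\<^bsub>M\<^esub> x))"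
      unfolding c(2) using assms(1) r summands[OF c(1)] by (rule finsum_smult_ldistr)
    also have "\<dots> = (\<Oplus>\<^bsub>M\<^esub>x\<in>X. (r \<otimes>\<^bsub>P\<^esub> c x) \<odot>\<^bsub>M\<^esub> x)"
      using c(1) C(1) r assms(2) by (intro M.finsum_cong') (auto intro!: smult_assoc1[symmetric])
    moreover have "(\<lambda>x. r \<otimes>\<^bsub>P\<^esub> c x) \<in> X \<rightarrow> C" using c(1) assms(5)[OF r'] by blast
    ultimately show ?thesis by (simp add: lin_span_memI)
  qed
qed

lemma lin_span_mono:
  assumes "X \<subseteq> Y" "finite Y" "Y \<subseteq> carrier M" "submonoid C (add_monoid P)"
  shows "lin_span C X \<subseteq> lin_span C Y"
proof (rule lin_span_least)
  show "finite X" using assms(1,2) by (rule finite_subset)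
  show "scalar_closed {} (lin_span C Y)"
    using assms(2-4) by (rule scalar_closed_lin_span) auto
  show "a \<odot>\<^bsub>M\<^esub> x \<in> lin_span C Y" if "x \<in> X" "a \<in> C" for x a
    using assms that by (intro smult_mem_lin_span) auto
qed

lemma lin_span_empty: "lin_span C {} = {\<zero>\<^bsub>M\<^esub>}"
  unfolding lin_span_def by auto

lemma lin_span_insertE:
  assumes "y \<in> lin_span C (insert h H)" "h \<notin> H" "finite H" "insert h H \<subseteq> carrier M" "C \<subseteq> carrier P"
  obtains a k where "a \<in> C" "k \<in> lin_span C H" "y = a \<odot>\<^bsub>M\<^esub> h \<oplus>\<^bsub>M\<^esub> k"
proof -
  obtain c where c: "c \<in> insert h H \<rightarrow> C" "y = (\<Oplus>\<^bsub>M\<^esub>x\<in>insert h H. c x \<odot>\<^bsub>M\<^esub> x)"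
    using assms(1) by (rule lin_span_memE)
  then have "y = c h \<odot>\<^bsub>M\<^esub> h \<oplus>\<^bsub>M\<^esub> (\<Oplus>\<^bsub>M\<^esub>x\<in>H. c x \<odot>\<^bsub>M\<^esub> x)"
    using assms(2-5) by (subst c(2), intro M.finsum_insert) auto
  moreover have "(\<Oplus>\<^bsub>M\<^esub>x\<in>H. c x \<odot>\<^bsub>M\<^esub> x) \<in> lin_span C H"
    using c(1) by (intro lin_span_memI) auto
  ultimately show ?thesis using that c(1) by blast
qed

lemma lin_span_coeffs:
  assumes "y \<in> lin_span (range f) X" "X \<subseteq> carrier M" "range f \<subseteq> carrier P"
  shows "\<exists>c. y = (\<Oplus>\<^bsub>M\<^esub>x\<in>X. f (c x) \<odot>\<^bsub>M\<^esub> x)"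
proof -
  obtain c' where c': "c' \<in> X \<rightarrow> range f" "y = (\<Oplus>\<^bsub>M\<^esub>x\<in>X. c' x \<odot>\<^bsub>M\<^esub> x)"
    using assms(1) by (rule lin_span_memE)
  define c where "c = (\<lambda>x. SOME a. c' x = f a)"
  have "c' x = f (c x)" if "x \<in> X" for x
  proof -
    have "\<exists>a. c' x = f a" using c'(1) that by blast
    then show ?thesis unfolding c_def by (rule someI_ex)
  qed
  moreover have "f a \<in> carrier P" for a using assms(3) by blast
  ultimately have "y = (\<Oplus>\<^bsub>M\<^esub>x\<in>X. f (c x) \<odot>\<^bsub>M\<^esub> x)"
    unfolding c'(2) using assms(2) by (intro M.finsum_cong') auto
  then show ?thesis by blast
qed

lemma K_span_memI: "finite X \<Longrightarrow> X \<subseteq> carrier M \<Longrightarrow>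
    (\<Oplus>\<^bsub>M\<^esub>x\<in>X. ps_const (c x) \<odot>\<^bsub>M\<^esub> x) \<in> lin_span K_scalars X"
  by (rule lin_span_memI[of "\<lambda>x. ps_const (c x)"]) auto

lemma K_subspace_K_span: "finite X \<Longrightarrow> X \<subseteq> carrier M \<Longrightarrow> K_subspace (lin_span K_scalars X)"
  by (rule scalar_closed_lin_span[OF _ _ submonoid_K_scalars])
    (auto simp: ps_const_eq ps_poly_mult)

lemma K_subspace_Kt_span: "finite X \<Longrightarrow> X \<subseteq> carrier M \<Longrightarrow> K_subspace (lin_span Kt_scalars X)"
  by (rule scalar_closed_lin_span[OF _ _ submonoid_Kt_scalars])
    (auto simp: ps_const_eq ps_poly_mult)

lemma P_submodule_P_span: "finite X \<Longrightarrow> X \<subseteq> carrier M \<Longrightarrow> P_submodule (lin_span (carrier P) X)"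
  by (rule scalar_closed_lin_span[OF _ _ submonoid_carrier]) auto

lemma P_submodule_var_ideal_span: "finite X \<Longrightarrow> X \<subseteq> carrier M \<Longrightarrow> P_submodule (lin_span var_ideal X)"
  by (rule scalar_closed_lin_span[OF _ _ submonoid_var_ideal]) (auto intro: var_ideal_mult)

lemma mem_K_span_self:
  assumes "finite X" "X \<subseteq> carrier M" "x \<in> X"
  shows "x \<in> lin_span K_scalars X"
  using smult_mem_lin_span[OF assms(1,2) submonoid_K_scalars assms(3), of "ps_const 1"] assms
  by (auto simp: ps_const_smult_one)

lemma fin_gen_module_generators:
  assumes "fin_gen_module s M"
  obtains A where "finite A" "A \<subseteq> carrier M" "carrier M \<subseteq> lin_span (carrier P) A"
proof -
  obtain A where A: "finite A" "A \<subseteq> carrier M"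
    "\<forall>m\<in>carrier M. \<exists>c\<in>A \<rightarrow> carrier P. m = (\<Oplus>\<^bsub>M\<^esub>a\<in>A. c a \<odot>\<^bsub>M\<^esub> a)"
    using assms unfolding fin_gen_module_def by blast
  have "carrier M \<subseteq> lin_span (carrier P) A"
  proof
    fix m assume "m \<in> carrier M"
    then obtain c where "c \<in> A \<rightarrow> carrier P" "m = (\<Oplus>\<^bsub>M\<^esub>a\<in>A. c a \<odot>\<^bsub>M\<^esub> a)" using A(3) by blast
    then show "m \<in> lin_span (carrier P) A" by (simp add: lin_span_memI)
  qed
  with A(1,2) show ?thesis by (rule that)
qed

section \<open>The fibers \<open>M(t0)\<close>\<close>

lemma P_submodule_tsub: "P_submodule (tsub M t0)"
proof (rule scalar_closedI)
  let ?t = "ps_t_minus t0"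
  show "tsub M t0 \<subseteq> carrier M" unfolding tsub_def by auto
  show "\<zero>\<^bsub>M\<^esub> \<in> tsub M t0"
    unfolding tsub_def using smult_r_null[OF ps_t_minus_in_carrier, of t0] M.zero_closed by force
  show "a \<oplus>\<^bsub>M\<^esub> b \<in> tsub M t0" if a: "a \<in> tsub M t0" and b: "b \<in> tsub M t0" for a b
  proof -
    obtain m1 where 1: "m1 \<in> carrier M" "a = ?t \<odot>\<^bsub>M\<^esub> m1" using a unfolding tsub_def by blast
    obtain m2 where 2: "m2 \<in> carrier M" "b = ?t \<odot>\<^bsub>M\<^esub> m2" using b unfolding tsub_def by blast
    have "a \<oplus>\<^bsub>M\<^esub> b = ?t \<odot>\<^bsub>M\<^esub> (m1 \<oplus>\<^bsub>M\<^esub> m2)" using 1 2 by (simp add: smult_r_distr)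
    then show ?thesis using 1 2 unfolding tsub_def by auto
  qed
  show "r \<odot>\<^bsub>M\<^esub> a \<in> tsub M t0" if r: "r \<in> carrier P" and a: "a \<in> tsub M t0" for r a
  proof -
    obtain m where m: "m \<in> carrier M" "a = ?t \<odot>\<^bsub>M\<^esub> m" using a unfolding tsub_def by blast
    have "r \<odot>\<^bsub>M\<^esub> a = (r \<otimes>\<^bsub>P\<^esub> ?t) \<odot>\<^bsub>M\<^esub> m" using m r by (simp add: smult_assoc1)
    also have "\<dots> = (?t \<otimes>\<^bsub>P\<^esub> r) \<odot>\<^bsub>M\<^esub> m" using r by (simp add: R.m_comm)
    also have "\<dots> = ?t \<odot>\<^bsub>M\<^esub> (r \<odot>\<^bsub>M\<^esub> m)" using m r by (simp add: smult_assoc1)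
    finally show ?thesis using m r unfolding tsub_def by auto
  qed
qed

lemma spans_fiber_iff:
  "spans_fiber M t0 B \<longleftrightarrow>
     finite B \<and> B \<subseteq> carrier M \<and> carrier M \<subseteq> lin_span K_scalars B <+>\<^bsub>M\<^esub> tsub M t0"
proof (cases "finite B \<and> B \<subseteq> carrier M")
  case True
  have "(\<exists>c. m \<ominus>\<^bsub>M\<^esub> (\<Oplus>\<^bsub>M\<^esub>b\<in>B. ps_const (c b) \<odot>\<^bsub>M\<^esub> b) \<in> tsub M t0)
      \<longleftrightarrow> m \<in> lin_span K_scalars B <+>\<^bsub>M\<^esub> tsub M t0" if m: "m \<in> carrier M" for m
  proof
    assume "\<exists>c. m \<ominus>\<^bsub>M\<^esub> (\<Oplus>\<^bsub>M\<^esub>b\<in>B. ps_const (c b) \<odot>\<^bsub>M\<^esub> b) \<in> tsub M t0"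
    then obtain c where c: "m \<ominus>\<^bsub>M\<^esub> (\<Oplus>\<^bsub>M\<^esub>b\<in>B. ps_const (c b) \<odot>\<^bsub>M\<^esub> b) \<in> tsub M t0" ..
    let ?k = "\<Oplus>\<^bsub>M\<^esub>b\<in>B. ps_const (c b) \<odot>\<^bsub>M\<^esub> b"
    have "?k \<in> carrier M" using True by (intro M.finsum_closed) auto
    then have m_eq: "?k \<oplus>\<^bsub>M\<^esub> (m \<ominus>\<^bsub>M\<^esub> ?k) = m" using m by (simp add: a_minus_def M.a_lcomm M.r_neg)
    have "?k \<in> lin_span K_scalars B" using True by (intro K_span_memI) auto
    from set_add_memI[OF this c] show "m \<in> lin_span K_scalars B <+>\<^bsub>M\<^esub> tsub M t0"
      by (simp only: m_eq)
  next
    assume "m \<in> lin_span K_scalars B <+>\<^bsub>M\<^esub> tsub M t0"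
    then obtain k z where kz: "k \<in> lin_span K_scalars B" "z \<in> tsub M t0" "m = k \<oplus>\<^bsub>M\<^esub> z"
      by (rule set_add_memE)
    obtain c where c: "k = (\<Oplus>\<^bsub>M\<^esub>b\<in>B. ps_const (c b) \<odot>\<^bsub>M\<^esub> b)"
      using lin_span_coeffs[OF kz(1)] True by auto
    have "k \<in> carrier M" using kz(1) scalar_closedD(1)[OF K_subspace_K_span] True by blast
    moreover have "z \<in> carrier M" using kz(2) scalar_closedD(1)[OF P_submodule_tsub] by blast
    ultimately have "m \<ominus>\<^bsub>M\<^esub> k = z" unfolding kz(3)
      by (simp add: a_minus_def M.a_comm[of k z] M.a_assoc M.r_neg)
    then show "\<exists>c. m \<ominus>\<^bsub>M\<^esub> (\<Oplus>\<^bsub>M\<^esub>b\<in>B. ps_const (c b) \<odot>\<^bsub>M\<^esub> b) \<in> tsub M t0"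
      using kz(2) c by blast
  qed
  then show ?thesis using True unfolding spans_fiber_def by (simp add: subset_eq)
qed (auto simp: spans_fiber_def)

lemma ps_poly_smult_eval:
  assumes "x \<in> carrier M"
  shows "ps_poly p \<odot>\<^bsub>M\<^esub> x =
    ps_const (poly p t0) \<odot>\<^bsub>M\<^esub> x \<oplus>\<^bsub>M\<^esub> ps_t_minus t0 \<odot>\<^bsub>M\<^esub> (ps_poly (synthetic_div p t0) \<odot>\<^bsub>M\<^esub> x)"
proof -
  have "ps_poly p = ps_poly ([:poly p t0:] + [:- t0, 1:] * synthetic_div p t0)"
    using synthetic_div_correct'[of t0 p] by (simp add: add.commute)
  also have "\<dots> = ps_const (poly p t0) \<oplus>\<^bsub>P\<^esub> ps_t_minus t0 \<otimes>\<^bsub>P\<^esub> ps_poly (synthetic_div p t0)"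
    by (simp only: ps_poly_add ps_poly_mult ps_const_eq ps_t_minus_eq)
  finally have p_eq: "ps_poly p = ps_const (poly p t0) \<oplus>\<^bsub>P\<^esub> ps_t_minus t0 \<otimes>\<^bsub>P\<^esub> ps_poly (synthetic_div p t0)" .
  show ?thesis unfolding p_eq using assms by (simp add: smult_l_distr smult_assoc1)
qed

lemma Kt_comb_eval:
  assumes "finite X" "X \<subseteq> carrier M"
  shows "\<exists>z\<in>tsub M t0. (\<Oplus>\<^bsub>M\<^esub>x\<in>X. ps_poly (q x) \<odot>\<^bsub>M\<^esub> x)
       = (\<Oplus>\<^bsub>M\<^esub>x\<in>X. ps_const (poly (q x) t0) \<odot>\<^bsub>M\<^esub> x) \<oplus>\<^bsub>M\<^esub> z"
proof
  let ?z = "\<lambda>x. ps_t_minus t0 \<odot>\<^bsub>M\<^esub> (ps_poly (synthetic_div (q x) t0) \<odot>\<^bsub>M\<^esub> x)"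
  have "?z \<in> X \<rightarrow> tsub M t0"
  proof
    fix x assume "x \<in> X"
    then have "ps_poly (synthetic_div (q x) t0) \<odot>\<^bsub>M\<^esub> x \<in> carrier M" using assms(2) by auto
    then show "?z x \<in> tsub M t0" unfolding tsub_def by blast
  qed
  then show "(\<Oplus>\<^bsub>M\<^esub>x\<in>X. ?z x) \<in> tsub M t0"
    using P_submodule_tsub assms(1) by (intro scalar_closed_finsum)
  have "(\<Oplus>\<^bsub>M\<^esub>x\<in>X. ps_poly (q x) \<odot>\<^bsub>M\<^esub> x)
      = (\<Oplus>\<^bsub>M\<^esub>x\<in>X. ps_const (poly (q x) t0) \<odot>\<^bsub>M\<^esub> x \<oplus>\<^bsub>M\<^esub> ?z x)"
    using assms(2) by (intro M.finsum_cong') (auto intro!: ps_poly_smult_eval)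
  also have "\<dots> = (\<Oplus>\<^bsub>M\<^esub>x\<in>X. ps_const (poly (q x) t0) \<odot>\<^bsub>M\<^esub> x) \<oplus>\<^bsub>M\<^esub> (\<Oplus>\<^bsub>M\<^esub>x\<in>X. ?z x)"
    using assms(2) by (intro M.finsum_addf) auto
  finally show "(\<Oplus>\<^bsub>M\<^esub>x\<in>X. ps_poly (q x) \<odot>\<^bsub>M\<^esub> x)
      = (\<Oplus>\<^bsub>M\<^esub>x\<in>X. ps_const (poly (q x) t0) \<odot>\<^bsub>M\<^esub> x) \<oplus>\<^bsub>M\<^esub> (\<Oplus>\<^bsub>M\<^esub>x\<in>X. ?z x)" .
qed

section \<open>Linear algebra over \<open>K\<close> modulo a subspace\<close>

lemma K_comb_closed: "x \<in> J \<rightarrow> carrier M \<Longrightarrow> (\<Oplus>\<^bsub>M\<^esub>j\<in>J. ps_const (c j) \<odot>\<^bsub>M\<^esub> x j) \<in> carrier M"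
  by (intro M.finsum_closed) auto

lemma K_comb_add:
  assumes "x \<in> J \<rightarrow> carrier M"
  shows "(\<Oplus>\<^bsub>M\<^esub>j\<in>J. ps_const (c j) \<odot>\<^bsub>M\<^esub> x j) \<oplus>\<^bsub>M\<^esub> (\<Oplus>\<^bsub>M\<^esub>j\<in>J. ps_const (d j) \<odot>\<^bsub>M\<^esub> x j)
       = (\<Oplus>\<^bsub>M\<^esub>j\<in>J. ps_const (c j + d j) \<odot>\<^bsub>M\<^esub> x j)"
proof -
  have "(\<Oplus>\<^bsub>M\<^esub>j\<in>J. ps_const (c j) \<odot>\<^bsub>M\<^esub> x j) \<oplus>\<^bsub>M\<^esub> (\<Oplus>\<^bsub>M\<^esub>j\<in>J. ps_const (d j) \<odot>\<^bsub>M\<^esub> x j)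
      = (\<Oplus>\<^bsub>M\<^esub>j\<in>J. ps_const (c j) \<odot>\<^bsub>M\<^esub> x j \<oplus>\<^bsub>M\<^esub> ps_const (d j) \<odot>\<^bsub>M\<^esub> x j)"
    using assms by (intro M.finsum_addf[symmetric]) auto
  also have "\<dots> = (\<Oplus>\<^bsub>M\<^esub>j\<in>J. ps_const (c j + d j) \<odot>\<^bsub>M\<^esub> x j)"
    using assms by (intro M.finsum_cong') (auto simp: ps_const_smult_add Pi_iff)
  finally show ?thesis .
qed

lemma K_comb_smult:
  assumes "finite J" "x \<in> J \<rightarrow> carrier M"
  shows "ps_const a \<odot>\<^bsub>M\<^esub> (\<Oplus>\<^bsub>M\<^esub>j\<in>J. ps_const (c j) \<odot>\<^bsub>M\<^esub> x j)
       = (\<Oplus>\<^bsub>M\<^esub>j\<in>J. ps_const (a * c j) \<odot>\<^bsub>M\<^esub> x j)"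
proof -
  have "ps_const a \<odot>\<^bsub>M\<^esub> (\<Oplus>\<^bsub>M\<^esub>j\<in>J. ps_const (c j) \<odot>\<^bsub>M\<^esub> x j)
      = (\<Oplus>\<^bsub>M\<^esub>j\<in>J. ps_const a \<odot>\<^bsub>M\<^esub> (ps_const (c j) \<odot>\<^bsub>M\<^esub> x j))"
    using assms by (intro finsum_smult_ldistr) auto
  also have "\<dots> = (\<Oplus>\<^bsub>M\<^esub>j\<in>J. ps_const (a * c j) \<odot>\<^bsub>M\<^esub> x j)"
    using assms(2) by (intro M.finsum_cong') (auto simp: ps_const_smult_smult Pi_iff)
  finally show ?thesis .
qed

lemma K_comb_zero:
  assumes "finite J" "x \<in> J \<rightarrow> carrier M" "\<And>j. j \<in> J \<Longrightarrow> c j = 0"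
  shows "(\<Oplus>\<^bsub>M\<^esub>j\<in>J. ps_const (c j) \<odot>\<^bsub>M\<^esub> x j) = \<zero>\<^bsub>M\<^esub>"
  using assms by (intro finsum_eq_zero) (auto simp: ps_const_smult_zero Pi_iff)

lemma K_comb_K_comb:
  assumes "finite I" "finite J" "x \<in> J \<rightarrow> carrier M"
  shows "(\<Oplus>\<^bsub>M\<^esub>i\<in>I. ps_const (a i) \<odot>\<^bsub>M\<^esub> (\<Oplus>\<^bsub>M\<^esub>j\<in>J. ps_const (b i j) \<odot>\<^bsub>M\<^esub> x j))
       = (\<Oplus>\<^bsub>M\<^esub>j\<in>J. ps_const (\<Sum>i\<in>I. a i * b i j) \<odot>\<^bsub>M\<^esub> x j)"
  using assms(1)
proof (induction I rule: finite_induct)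
  case empty
  then show ?case using K_comb_zero[OF assms(2,3)] by simp
next
  case (insert i I)
  have "(\<Oplus>\<^bsub>M\<^esub>i\<in>insert i I. ps_const (a i) \<odot>\<^bsub>M\<^esub> (\<Oplus>\<^bsub>M\<^esub>j\<in>J. ps_const (b i j) \<odot>\<^bsub>M\<^esub> x j))
      = (\<Oplus>\<^bsub>M\<^esub>j\<in>J. ps_const (a i * b i j) \<odot>\<^bsub>M\<^esub> x j) \<oplus>\<^bsub>M\<^esub>
        (\<Oplus>\<^bsub>M\<^esub>j\<in>J. ps_const (\<Sum>i\<in>I. a i * b i j) \<odot>\<^bsub>M\<^esub> x j)"
    using insert K_comb_closed[OF assms(3)] by (simp add: K_comb_smult[OF assms(2,3)])
  also have "\<dots> = (\<Oplus>\<^bsub>M\<^esub>j\<in>J. ps_const (\<Sum>i\<in>insert i I. a i * b i j) \<odot>\<^bsub>M\<^esub> x j)"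
    using insert.hyps by (simp add: K_comb_add[OF assms(3)])
  finally show ?case .
qed

lemma K_comb_delta:
  assumes "finite J" "x \<in> J \<rightarrow> carrier M" "i \<in> J"
  shows "(\<Oplus>\<^bsub>M\<^esub>j\<in>J. ps_const (if j = i then d else 0) \<odot>\<^bsub>M\<^esub> x j) = ps_const d \<odot>\<^bsub>M\<^esub> x i"
proof -
  have J: "J = insert i (J - {i})" using assms(3) by auto
  have "(\<Oplus>\<^bsub>M\<^esub>j\<in>J. ps_const (if j = i then d else 0) \<odot>\<^bsub>M\<^esub> x j)
      = ps_const d \<odot>\<^bsub>M\<^esub> x i \<oplus>\<^bsub>M\<^esub> (\<Oplus>\<^bsub>M\<^esub>j\<in>J - {i}. ps_const (if j = i then d else 0) \<odot>\<^bsub>M\<^esub> x j)"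
    using assms by (subst (1) J, subst M.finsum_insert) auto
  also have "(\<Oplus>\<^bsub>M\<^esub>j\<in>J - {i}. ps_const (if j = i then d else 0) \<odot>\<^bsub>M\<^esub> x j) = \<zero>\<^bsub>M\<^esub>"
    using assms by (intro K_comb_zero) auto
  finally show ?thesis using assms(2,3) by (auto simp: Pi_iff)
qed

lemma K_comb_support:
  assumes "finite Y" "Y \<subseteq> carrier M"
  shows "(\<Oplus>\<^bsub>M\<^esub>y\<in>Y. ps_const (l y) \<odot>\<^bsub>M\<^esub> y) = (\<Oplus>\<^bsub>M\<^esub>y\<in>{y\<in>Y. l y \<noteq> 0}. ps_const (l y) \<odot>\<^bsub>M\<^esub> y)"
  using assms by (intro M.add.finprod_mono_neutral_cong_left[symmetric]) (auto simp: ps_const_smult_zero)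

lemma K_span_set_add_least:
  assumes "K_subspace W" "finite X" "X \<subseteq> W" "Z \<subseteq> W"
  shows "lin_span K_scalars X <+>\<^bsub>M\<^esub> Z \<subseteq> W"
proof (rule set_add_least[OF assms(1) _ assms(4)])
  show "lin_span K_scalars X \<subseteq> W"
    using assms(3) by (intro lin_span_least[OF assms(2,1)]) (auto intro: scalar_closedD(4)[OF assms(1)])
qed

lemma mem_K_span_set_add:
  assumes "finite X" "X \<subseteq> carrier M" "x \<in> X" "\<zero>\<^bsub>M\<^esub> \<in> Z"
  shows "x \<in> lin_span K_scalars X <+>\<^bsub>M\<^esub> Z"
proof -
  have "lin_span K_scalars X \<subseteq> lin_span K_scalars X <+>\<^bsub>M\<^esub> Z"
    using scalar_closedD(1)[OF K_subspace_K_span[OF assms(1,2)]] assms(4) by (rule set_add_upper_left)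
  then show ?thesis using mem_K_span_self[OF assms(1-3)] by blast
qed

lemma K_span_set_add_coeffs:
  assumes X: "X \<subseteq> carrier M" and Y: "Y \<subseteq> lin_span K_scalars X <+>\<^bsub>M\<^esub> Z"
  obtains cf zf where "\<And>y. y \<in> Y \<Longrightarrow> (\<Oplus>\<^bsub>M\<^esub>x\<in>X. ps_const (cf y x) \<odot>\<^bsub>M\<^esub> x) \<oplus>\<^bsub>M\<^esub> zf y = y"
    "\<And>y. y \<in> Y \<Longrightarrow> zf y \<in> Z"
proof -
  have "\<exists>cz. snd cz \<in> Z \<and> y = (\<Oplus>\<^bsub>M\<^esub>x\<in>X. ps_const (fst cz x) \<odot>\<^bsub>M\<^esub> x) \<oplus>\<^bsub>M\<^esub> snd cz"
    if y: "y \<in> Y" for y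
  proof -
    obtain k z where kz: "k \<in> lin_span K_scalars X" "z \<in> Z" "y = k \<oplus>\<^bsub>M\<^esub> z"
      using Y y by (blast elim: set_add_memE)
    obtain c where "k = (\<Oplus>\<^bsub>M\<^esub>x\<in>X. ps_const (c x) \<odot>\<^bsub>M\<^esub> x)"
      using lin_span_coeffs[OF kz(1) X] by auto
    then show ?thesis using kz by (intro exI[of _ "(c, z)"]) simp
  qed
  then have "\<forall>y\<in>Y. \<exists>cz. snd cz \<in> Z \<and> y = (\<Oplus>\<^bsub>M\<^esub>x\<in>X. ps_const (fst cz x) \<odot>\<^bsub>M\<^esub> x) \<oplus>\<^bsub>M\<^esub> snd cz"
    by blast
  from bchoice[OF this] obtain cz where cz: "\<forall>y\<in>Y. snd (cz y) \<in> Z \<and>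
      y = (\<Oplus>\<^bsub>M\<^esub>x\<in>X. ps_const (fst (cz y) x) \<odot>\<^bsub>M\<^esub> x) \<oplus>\<^bsub>M\<^esub> snd (cz y)"
    by blast
  show ?thesis
  proof (rule that)
    fix y assume "y \<in> Y"
    note rep = bspec[OF cz this]
    show "(\<Oplus>\<^bsub>M\<^esub>x\<in>X. ps_const (fst (cz y) x) \<odot>\<^bsub>M\<^esub> x) \<oplus>\<^bsub>M\<^esub> snd (cz y) = y"
      by (rule sym[OF conjunct2[OF rep]])
  next
    fix y assume "y \<in> Y"
    show "snd (cz y) \<in> Z" using bspec[OF cz \<open>y \<in> Y\<close>] by (rule conjunct1)
  qed
qed

lemma K_dependent_modulo:
  assumes Z: "K_subspace Z" and X: "finite X" "X \<subseteq> carrier M"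
    and Y: "finite Y" "Y \<subseteq> lin_span K_scalars X <+>\<^bsub>M\<^esub> Z" and card: "card X < card Y"
  shows "\<exists>l. (\<exists>y\<in>Y. l y \<noteq> 0) \<and> (\<Oplus>\<^bsub>M\<^esub>y\<in>Y. ps_const (l y) \<odot>\<^bsub>M\<^esub> y) \<in> Z"
proof -
  obtain cf zf where rep: "\<And>y. y \<in> Y \<Longrightarrow> (\<Oplus>\<^bsub>M\<^esub>x\<in>X. ps_const (cf y x) \<odot>\<^bsub>M\<^esub> x) \<oplus>\<^bsub>M\<^esub> zf y = y"
    and zf: "\<And>y. y \<in> Y \<Longrightarrow> zf y \<in> Z"
    using K_span_set_add_coeffs[OF X(2) Y(2)] by blast
  have zf_carrier: "zf y \<in> carrier M" if "y \<in> Y" for y using zf[OF that] scalar_closedD(1)[OF Z] by blast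
  have X_carrier: "(\<lambda>x. x) \<in> X \<rightarrow> carrier M" using X(2) by auto
  obtain l where l: "\<exists>y\<in>Y. l y \<noteq> 0" "\<forall>x\<in>X. (\<Sum>y\<in>Y. l y * cf y x) = 0"
    using homogeneous_system_nontrivial_solution[OF X(1) Y(1) card, of cf] by blast
  have "(\<Oplus>\<^bsub>M\<^esub>y\<in>Y. ps_const (l y) \<odot>\<^bsub>M\<^esub> y)
      = (\<Oplus>\<^bsub>M\<^esub>y\<in>Y. ps_const (l y) \<odot>\<^bsub>M\<^esub> (\<Oplus>\<^bsub>M\<^esub>x\<in>X. ps_const (cf y x) \<odot>\<^bsub>M\<^esub> x)
          \<oplus>\<^bsub>M\<^esub> ps_const (l y) \<odot>\<^bsub>M\<^esub> zf y)"
  proof (rule M.finsum_cong')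
    show "ps_const (l y) \<odot>\<^bsub>M\<^esub> y = ps_const (l y) \<odot>\<^bsub>M\<^esub> (\<Oplus>\<^bsub>M\<^esub>x\<in>X. ps_const (cf y x) \<odot>\<^bsub>M\<^esub> x)
        \<oplus>\<^bsub>M\<^esub> ps_const (l y) \<odot>\<^bsub>M\<^esub> zf y" if "y \<in> Y" for y
      using zf_carrier[OF that] K_comb_closed[OF X_carrier]
      by (simp add: smult_r_distr[symmetric] rep[OF that])
  qed (use K_comb_closed[OF X_carrier] zf_carrier in auto)
  also have "\<dots> = (\<Oplus>\<^bsub>M\<^esub>y\<in>Y. ps_const (l y) \<odot>\<^bsub>M\<^esub> (\<Oplus>\<^bsub>M\<^esub>x\<in>X. ps_const (cf y x) \<odot>\<^bsub>M\<^esub> x))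
      \<oplus>\<^bsub>M\<^esub> (\<Oplus>\<^bsub>M\<^esub>y\<in>Y. ps_const (l y) \<odot>\<^bsub>M\<^esub> zf y)"
    using K_comb_closed[OF X_carrier] zf_carrier by (intro M.finsum_addf) auto
  also have "(\<Oplus>\<^bsub>M\<^esub>y\<in>Y. ps_const (l y) \<odot>\<^bsub>M\<^esub> (\<Oplus>\<^bsub>M\<^esub>x\<in>X. ps_const (cf y x) \<odot>\<^bsub>M\<^esub> x)) = \<zero>\<^bsub>M\<^esub>"
    using l(2) by (simp add: K_comb_K_comb[OF Y(1) X(1) X_carrier] K_comb_zero[OF X(1) X_carrier])
  finally have "(\<Oplus>\<^bsub>M\<^esub>y\<in>Y. ps_const (l y) \<odot>\<^bsub>M\<^esub> y) = (\<Oplus>\<^bsub>M\<^esub>y\<in>Y. ps_const (l y) \<odot>\<^bsub>M\<^esub> zf y)"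
    using zf_carrier by (simp add: M.finsum_closed Pi_iff)
  moreover have "(\<Oplus>\<^bsub>M\<^esub>y\<in>Y. ps_const (l y) \<odot>\<^bsub>M\<^esub> zf y) \<in> Z"
    using Y(1) zf by (intro scalar_closed_finsum[OF Z]) (auto intro: K_subspace_smult[OF Z])
  ultimately show ?thesis using l(1) by auto
qed

lemma mem_K_span_remove:
  assumes Z: "K_subspace Z" and Y: "finite Y" "Y \<subseteq> carrier M" and y0: "y0 \<in> Y" "l y0 \<noteq> 0"
    and rel: "(\<Oplus>\<^bsub>M\<^esub>y\<in>Y. ps_const (l y) \<odot>\<^bsub>M\<^esub> y) \<in> Z"
  shows "y0 \<in> lin_span K_scalars (Y - {y0}) <+>\<^bsub>M\<^esub> Z"
proof -
  let ?S = "\<Oplus>\<^bsub>M\<^esub>y\<in>Y - {y0}. ps_const (l y) \<odot>\<^bsub>M\<^esub> y"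
  have S: "?S \<in> carrier M" "?S \<in> lin_span K_scalars (Y - {y0})"
    using Y by (auto intro: K_comb_closed K_span_memI)
  have y0c: "y0 \<in> carrier M" using Y(2) y0(1) by blast
  have Y_eq: "Y = insert y0 (Y - {y0})" using y0(1) by auto
  have "(\<Oplus>\<^bsub>M\<^esub>y\<in>Y. ps_const (l y) \<odot>\<^bsub>M\<^esub> y) = ps_const (l y0) \<odot>\<^bsub>M\<^esub> y0 \<oplus>\<^bsub>M\<^esub> ?S"
    using Y y0c by (subst (1) Y_eq, intro M.finsum_insert) auto
  then have scaled: "ps_const (1 / l y0) \<odot>\<^bsub>M\<^esub> (\<Oplus>\<^bsub>M\<^esub>y\<in>Y. ps_const (l y) \<odot>\<^bsub>M\<^esub> y)
      = y0 \<oplus>\<^bsub>M\<^esub> ps_const (1 / l y0) \<odot>\<^bsub>M\<^esub> ?S"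
    using y0c S(1) y0(2) by (simp add: smult_r_distr ps_const_smult_smult ps_const_smult_one)
  have w: "ps_const (- 1 / l y0) \<odot>\<^bsub>M\<^esub> ?S \<in> lin_span K_scalars (Y - {y0})"
    using K_subspace_smult[OF K_subspace_K_span S(2)] Y by auto
  have z: "ps_const (1 / l y0) \<odot>\<^bsub>M\<^esub> (\<Oplus>\<^bsub>M\<^esub>y\<in>Y. ps_const (l y) \<odot>\<^bsub>M\<^esub> y) \<in> Z"
    using K_subspace_smult[OF Z rel] .
  have "ps_const (- 1 / l y0) \<odot>\<^bsub>M\<^esub> ?S \<oplus>\<^bsub>M\<^esub> (y0 \<oplus>\<^bsub>M\<^esub> ps_const (1 / l y0) \<odot>\<^bsub>M\<^esub> ?S) = y0"
    using y0c S(1) by (simp add: M.a_lcomm ps_const_smult_add ps_const_smult_zero)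
  with set_add_memI[OF w z] show ?thesis by (simp only: scaled)
qed

lemma K_span_remove_redundant:
  assumes Z: "K_subspace Z" and S: "finite S" "S \<subseteq> carrier M"
    and y0: "y0 \<in> lin_span K_scalars (S - {y0}) <+>\<^bsub>M\<^esub> Z"
  shows "lin_span K_scalars S <+>\<^bsub>M\<^esub> Z \<subseteq> lin_span K_scalars (S - {y0}) <+>\<^bsub>M\<^esub> Z"
proof (rule K_span_set_add_least)
  have S': "finite (S - {y0})" "S - {y0} \<subseteq> carrier M" using S by auto
  show "K_subspace (lin_span K_scalars (S - {y0}) <+>\<^bsub>M\<^esub> Z)"
    using K_subspace_K_span[OF S'] Z by (rule scalar_closed_set_add) simp
  show "S \<subseteq> lin_span K_scalars (S - {y0}) <+>\<^bsub>M\<^esub> Z"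
  proof
    fix x assume "x \<in> S"
    show "x \<in> lin_span K_scalars (S - {y0}) <+>\<^bsub>M\<^esub> Z"
    proof (cases "x = y0")
      case False
      with \<open>x \<in> S\<close> show ?thesis using mem_K_span_set_add[OF S'] scalar_closedD(2)[OF Z] by simp
    qed (use y0 in simp)
  qed
  show "Z \<subseteq> lin_span K_scalars (S - {y0}) <+>\<^bsub>M\<^esub> Z"
    by (rule set_add_upper_right[OF scalar_closedD(1)[OF Z] scalar_closedD(2)[OF K_subspace_K_span[OF S']]])
qed (use S in simp)

lemma finsum_smult_rdistr:
  assumes "finite I" "f \<in> I \<rightarrow> carrier P" "x \<in> carrier M"
  shows "(\<Oplus>\<^bsub>P\<^esub>i\<in>I. f i) \<odot>\<^bsub>M\<^esub> x = (\<Oplus>\<^bsub>M\<^esub>i\<in>I. f i \<odot>\<^bsub>M\<^esub> x)"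
  using assms(1,2)
proof (induction I rule: finite_induct)
  case (insert i I)
  have "(\<Oplus>\<^bsub>P\<^esub>j\<in>insert i I. f j) = f i \<oplus>\<^bsub>P\<^esub> (\<Oplus>\<^bsub>P\<^esub>j\<in>I. f j)"
    using insert by (intro R.finsum_insert) auto
  moreover have "(\<Oplus>\<^bsub>M\<^esub>j\<in>insert i I. f j \<odot>\<^bsub>M\<^esub> x) = f i \<odot>\<^bsub>M\<^esub> x \<oplus>\<^bsub>M\<^esub> (\<Oplus>\<^bsub>M\<^esub>j\<in>I. f j \<odot>\<^bsub>M\<^esub> x)"
    using insert assms(3) by (intro M.finsum_insert) auto
  ultimately show ?case using insert assms(3) by (simp add: smult_l_distr)
qed (simp add: assms(3))

lemma subset_if_invertible_relations:
  assumes W: "K_subspace W" and xs: "set xs \<subseteq> carrier M"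
    and A: "A \<in> carrier_mat (length xs) (length xs)" "det A \<noteq> 0"
    and rel: "\<And>i. i < length xs \<Longrightarrow>
       (\<Oplus>\<^bsub>M\<^esub>j\<in>{..<length xs}. ps_const (A $$ (i, j)) \<odot>\<^bsub>M\<^esub> xs ! j) \<in> W"
  shows "set xs \<subseteq> W"
proof
  let ?m = "length xs" and ?adj = "adj_mat A"
  have xs_carrier: "(\<lambda>j. xs ! j) \<in> {..<?m} \<rightarrow> carrier M" using xs by auto
  fix e assume "e \<in> set xs"
  then obtain i where i: "i < ?m" "e = xs ! i" by (auto simp: set_conv_nth)
  \<comment> \<open>Combining the relations with the \<open>i\<close>-th row of the adjugate isolates \<open>det A \<cdot> e\<close>.\<close>
  have "(\<Oplus>\<^bsub>M\<^esub>k\<in>{..<?m}. ps_const (?adj $$ (i, k)) \<odot>\<^bsub>M\<^esub>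
      (\<Oplus>\<^bsub>M\<^esub>j\<in>{..<?m}. ps_const (A $$ (k, j)) \<odot>\<^bsub>M\<^esub> xs ! j)) \<in> W"
    using rel by (intro scalar_closed_finsum[OF W]) (auto intro: K_subspace_smult[OF W])
  also have "(\<Oplus>\<^bsub>M\<^esub>k\<in>{..<?m}. ps_const (?adj $$ (i, k)) \<odot>\<^bsub>M\<^esub>
      (\<Oplus>\<^bsub>M\<^esub>j\<in>{..<?m}. ps_const (A $$ (k, j)) \<odot>\<^bsub>M\<^esub> xs ! j))
    = (\<Oplus>\<^bsub>M\<^esub>j\<in>{..<?m}. ps_const (\<Sum>k\<in>{..<?m}. ?adj $$ (i, k) * A $$ (k, j)) \<odot>\<^bsub>M\<^esub> xs ! j)"
    by (rule K_comb_K_comb[OF _ _ xs_carrier]) simp_all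
  also have "\<dots> = (\<Oplus>\<^bsub>M\<^esub>j\<in>{..<?m}. ps_const (if j = i then det A else 0) \<odot>\<^bsub>M\<^esub> xs ! j)"
  proof (rule M.finsum_cong')
    fix j assume "j \<in> {..<?m}"
    then have "(\<Sum>k\<in>{..<?m}. ?adj $$ (i, k) * A $$ (k, j)) = (?adj * A) $$ (i, j)"
      using adj_mat(1)[OF A(1)] A(1) i(1)
      by (simp add: index_mult_mat scalar_prod_def atLeast0LessThan)
    also have "\<dots> = (if j = i then det A else 0)"
      using adj_mat(3)[OF A(1)] i(1) \<open>j \<in> {..<?m}\<close> by auto
    finally show "ps_const (\<Sum>k\<in>{..<?m}. ?adj $$ (i, k) * A $$ (k, j)) \<odot>\<^bsub>M\<^esub> xs ! j
        = ps_const (if j = i then det A else 0) \<odot>\<^bsub>M\<^esub> xs ! j" by simp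
  qed (use xs_carrier in auto)
  also have "\<dots> = ps_const (det A) \<odot>\<^bsub>M\<^esub> e"
    using i by (simp add: K_comb_delta[OF _ xs_carrier])
  finally have "ps_const (1 / det A) \<odot>\<^bsub>M\<^esub> (ps_const (det A) \<odot>\<^bsub>M\<^esub> e) \<in> W"
    by (rule K_subspace_smult[OF W])
  moreover have "e \<in> carrier M" using i xs by auto
  ultimately show "e \<in> W" using A(2) by (simp add: ps_const_smult_smult ps_const_smult_one)
qed

lemma K_subspace_chain_stabilizes:
  assumes Z: "\<And>j. K_subspace (Z j)" and dec: "\<And>j. Z (Suc j) \<subseteq> Z j"
    and S: "finite S" "S \<subseteq> carrier M" "card S \<le> n"
    and cov: "Z 0 \<subseteq> lin_span K_scalars S <+>\<^bsub>M\<^esub> Z (Suc n)"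
  shows "\<exists>k\<le>n. Z k \<subseteq> Z (Suc k)"
proof (rule ccontr)
  assume "\<not> (\<exists>k\<le>n. Z k \<subseteq> Z (Suc k))"
  then have "\<forall>k. \<exists>v. k \<le> n \<longrightarrow> v \<in> Z k \<and> v \<notin> Z (Suc k)" by blast
  then obtain y where y: "\<And>k. k \<le> n \<Longrightarrow> y k \<in> Z k \<and> y k \<notin> Z (Suc k)" by metis
  have anti: "Z j' \<subseteq> Z j" if "j \<le> j'" for j j' using lift_Suc_antimono_le[of Z, OF dec that] .
  have "inj_on y {..n}" using dec y by (rule inj_on_strict_chain_witnesses)
  define Y where "Y = y ` {..n}"
  have Y: "finite Y" "card Y = Suc n"
    using card_image[OF \<open>inj_on y {..n}\<close>] by (simp_all add: Y_def)
  have "Y \<subseteq> Z 0"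
  proof
    fix v assume "v \<in> Y"
    then obtain k where "k \<le> n" "v = y k" by (auto simp: Y_def)
    then show "v \<in> Z 0" using y[of k] anti[of 0 k] by auto
  qed
  then have Y_carrier: "Y \<subseteq> carrier M" using scalar_closedD(1)[OF Z[of 0]] by (rule subset_trans)
  have "Y \<subseteq> lin_span K_scalars S <+>\<^bsub>M\<^esub> Z (Suc n)" using \<open>Y \<subseteq> Z 0\<close> cov by (rule subset_trans)
  moreover have "card S < card Y" using Y(2) S(3) by simp
  ultimately obtain l where l: "\<exists>v\<in>Y. l v \<noteq> 0" "(\<Oplus>\<^bsub>M\<^esub>v\<in>Y. ps_const (l v) \<odot>\<^bsub>M\<^esub> v) \<in> Z (Suc n)"
    using K_dependent_modulo[OF Z S(1,2) Y(1)] by blast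
  define J where "J = {j. j \<le> n \<and> l (y j) \<noteq> 0}"
  define j0 where "j0 = Min J"
  have "finite J" by (simp add: J_def)
  moreover have "J \<noteq> {}" using l(1) by (auto simp: J_def Y_def)
  ultimately have "j0 \<in> J" unfolding j0_def by (rule Min_in)
  then have j0: "j0 \<le> n" "l (y j0) \<noteq> 0" by (simp_all add: J_def)
  have j0_min: "j0 \<le> j" if "j \<in> J" for j unfolding j0_def using \<open>finite J\<close> that by (rule Min_le)
  \<comment> \<open>The relation expresses \<open>y j0\<close> through the \<open>y j\<close> with \<open>j > j0\<close>, which all lie in \<open>Z (Suc j0)\<close>.\<close>
  define Y' where "Y' = {v \<in> Y. l v \<noteq> 0}"
  have Y': "finite Y'" "Y' \<subseteq> carrier M" "y j0 \<in> Y'"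
    using Y(1) Y_carrier j0 by (auto simp: Y'_def Y_def)
  have "y j0 \<in> lin_span K_scalars (Y' - {y j0}) <+>\<^bsub>M\<^esub> Z (Suc n)"
    using l(2) K_comb_support[OF Y(1) Y_carrier, of l] j0(2)
    by (intro mem_K_span_remove[OF Z Y']) (simp_all add: Y'_def)
  moreover have "Y' - {y j0} \<subseteq> Z (Suc j0)"
  proof
    fix v assume v: "v \<in> Y' - {y j0}"
    then obtain j where j: "j \<le> n" "v = y j" "l (y j) \<noteq> 0" by (auto simp: Y'_def Y_def)
    then have "j0 < j" using j0_min[of j] v by (auto simp: J_def le_less)
    then show "v \<in> Z (Suc j0)" using y[of j] j anti[of "Suc j0" j] by auto
  qed
  then have "lin_span K_scalars (Y' - {y j0}) <+>\<^bsub>M\<^esub> Z (Suc n) \<subseteq> Z (Suc j0)"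
    using anti[of "Suc j0" "Suc n"] j0(1) Y'(1) by (intro K_span_set_add_least[OF Z]) auto
  ultimately show False using y[OF j0(1)] by blast
qed

lemma exists_small_K_spanning_subset:
  assumes Z: "K_subspace Z"
    and B: "finite B" "B \<subseteq> carrier M" "carrier M \<subseteq> lin_span K_scalars B <+>\<^bsub>M\<^esub> Z"
    and E: "finite E" "E \<subseteq> carrier M"
  shows "\<exists>S\<subseteq>E. E \<subseteq> lin_span K_scalars S <+>\<^bsub>M\<^esub> Z \<and> card S \<le> card B"
proof -
  define spans where "spans S \<longleftrightarrow> S \<subseteq> E \<and> E \<subseteq> lin_span K_scalars S <+>\<^bsub>M\<^esub> Z" for S
  have "spans E" using mem_K_span_set_add[OF E] scalar_closedD(2)[OF Z] by (auto simp: spans_def)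
  then obtain S where S: "spans S" and min: "\<And>S'. spans S' \<Longrightarrow> card S \<le> card S'"
    using ex_has_least_nat[of spans E card] by blast
  have "S \<subseteq> E" using S by (simp add: spans_def)
  then have fS: "finite S" and Sc: "S \<subseteq> carrier M" using finite_subset[OF _ E(1)] E(2) by auto
  have "card S \<le> card B"
  proof (rule ccontr)
    assume "\<not> card S \<le> card B"
    then have "card B < card S" by simp
    moreover have "S \<subseteq> lin_span K_scalars B <+>\<^bsub>M\<^esub> Z" using Sc B(3) by (rule subset_trans)
    ultimately obtain l where l: "\<exists>y\<in>S. l y \<noteq> 0" "(\<Oplus>\<^bsub>M\<^esub>y\<in>S. ps_const (l y) \<odot>\<^bsub>M\<^esub> y) \<in> Z"
      using K_dependent_modulo[OF Z B(1,2) fS] by blast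
    then obtain y0 where y0: "y0 \<in> S" "l y0 \<noteq> 0" by blast
    have "y0 \<in> lin_span K_scalars (S - {y0}) <+>\<^bsub>M\<^esub> Z"
      by (rule mem_K_span_remove[OF Z fS Sc y0 l(2)])
    then have "spans (S - {y0})"
      using K_span_remove_redundant[OF Z fS Sc] S by (auto simp: spans_def)
    then have "card S \<le> card (S - {y0})" by (rule min)
    moreover have "card (S - {y0}) < card S" using fS y0(1) by (rule card_Diff1_less)
    ultimately show False by simp
  qed
  then show ?thesis using S by (auto simp: spans_def)
qed

section \<open>Nakayama's lemma\<close>

text \<open>Since \<open>1 - c\<close> is a unit for \<open>c\<close> in the ideal of the variables, \<open>h = c h + r\<close> forces
  \<open>h = (1 - c)\<^sup>-\<^sup>1 r\<close>.\<close>

lemma mem_if_eq_var_ideal_smult_add: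
  assumes W: "P_submodule W" and c: "c \<in> var_ideal" and h: "h \<in> carrier M"
    and h_eq: "h = c \<odot>\<^bsub>M\<^esub> h \<oplus>\<^bsub>M\<^esub> r" and r: "r \<in> W"
  shows "h \<in> W"
proof -
  have cP: "c \<in> carrier P" "c exp0 = 0" using c by (auto simp: var_ideal_def)
  have rc: "r \<in> carrier M" using r scalar_closedD(1)[OF W] by blast
  have "(\<one>\<^bsub>P\<^esub> \<ominus>\<^bsub>P\<^esub> c) \<odot>\<^bsub>M\<^esub> h = h \<oplus>\<^bsub>M\<^esub> \<ominus>\<^bsub>M\<^esub> (c \<odot>\<^bsub>M\<^esub> h)"
    using cP h by (simp add: a_minus_def smult_l_distr smult_l_minus)
  also have "\<dots> = (c \<odot>\<^bsub>M\<^esub> h \<oplus>\<^bsub>M\<^esub> r) \<oplus>\<^bsub>M\<^esub> \<ominus>\<^bsub>M\<^esub> (c \<odot>\<^bsub>M\<^esub> h)"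
    using h_eq by (rule arg_cong[where f = "\<lambda>v. v \<oplus>\<^bsub>M\<^esub> \<ominus>\<^bsub>M\<^esub> (c \<odot>\<^bsub>M\<^esub> h)"])
  also have "\<dots> = r"
    using rc cP h by (simp add: M.a_comm[of "c \<odot>\<^bsub>M\<^esub> h" r] M.a_assoc M.r_neg)
  finally have one_minus_c: "(\<one>\<^bsub>P\<^esub> \<ominus>\<^bsub>P\<^esub> c) \<odot>\<^bsub>M\<^esub> h = r" .
  obtain u where u: "u \<in> carrier P" "u \<otimes>\<^bsub>P\<^esub> (\<one>\<^bsub>P\<^esub> \<ominus>\<^bsub>P\<^esub> c) = \<one>\<^bsub>P\<^esub>"
    using one_minus_invertible[OF cP] by blast
  have "u \<odot>\<^bsub>M\<^esub> ((\<one>\<^bsub>P\<^esub> \<ominus>\<^bsub>P\<^esub> c) \<odot>\<^bsub>M\<^esub> h) = h"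
    using u cP h by (simp add: smult_assoc1[symmetric])
  moreover have "u \<odot>\<^bsub>M\<^esub> r \<in> W" by (rule scalar_closedD(4)[OF W u(1) r])
  ultimately show ?thesis by (simp only: one_minus_c)
qed

lemma nakayama_step:
  assumes L: "P_submodule L" and H: "finite H" "insert h H \<subseteq> carrier M" "h \<notin> H"
    and h: "h \<in> lin_span var_ideal (insert h H) <+>\<^bsub>M\<^esub> L"
  shows "lin_span var_ideal (insert h H) <+>\<^bsub>M\<^esub> L \<subseteq> lin_span var_ideal H <+>\<^bsub>M\<^esub> L"
proof -
  let ?W = "lin_span var_ideal H <+>\<^bsub>M\<^esub> L"
  have span_H: "P_submodule (lin_span var_ideal H)"
    using H by (intro P_submodule_var_ideal_span) auto
  have W: "P_submodule ?W" by (rule scalar_closed_set_add[OF span_H L]) simp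
  have HW: "lin_span var_ideal H \<subseteq> ?W"
    by (rule set_add_upper_left[OF scalar_closedD(1)[OF span_H] scalar_closedD(2)[OF L]])
  have LW: "L \<subseteq> ?W"
    by (rule set_add_upper_right[OF scalar_closedD(1)[OF L] scalar_closedD(2)[OF span_H]])
  have hc: "h \<in> carrier M" using H(2) by blast
  obtain k0 l0 where kl0: "k0 \<in> lin_span var_ideal (insert h H)" "l0 \<in> L" "h = k0 \<oplus>\<^bsub>M\<^esub> l0"
    using h by (rule set_add_memE)
  obtain c k where ck: "c \<in> var_ideal" "k \<in> lin_span var_ideal H" "k0 = c \<odot>\<^bsub>M\<^esub> h \<oplus>\<^bsub>M\<^esub> k"
    using lin_span_insertE[OF kl0(1) H(3,1,2) var_ideal_subset] by blast
  have "k \<in> carrier M" "l0 \<in> carrier M"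
    using ck(2) kl0(2) scalar_closedD(1)[OF span_H] scalar_closedD(1)[OF L] by auto
  have "h = (c \<odot>\<^bsub>M\<^esub> h \<oplus>\<^bsub>M\<^esub> k) \<oplus>\<^bsub>M\<^esub> l0" using kl0(3) by (simp only: ck(3))
  also have "\<dots> = c \<odot>\<^bsub>M\<^esub> h \<oplus>\<^bsub>M\<^esub> (k \<oplus>\<^bsub>M\<^esub> l0)"
    using \<open>k \<in> carrier M\<close> \<open>l0 \<in> carrier M\<close> subsetD[OF var_ideal_subset ck(1)] hc
    by (simp add: M.a_assoc)
  finally have "h = c \<odot>\<^bsub>M\<^esub> h \<oplus>\<^bsub>M\<^esub> (k \<oplus>\<^bsub>M\<^esub> l0)" .
  then have "h \<in> ?W"
    using set_add_memI[OF ck(2) kl0(2)] by (rule mem_if_eq_var_ideal_smult_add[OF W ck(1) hc])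
  have "a \<odot>\<^bsub>M\<^esub> x \<in> ?W" if x: "x \<in> insert h H" and a: "a \<in> var_ideal" for x a
  proof (cases "x = h")
    case True
    have "a \<in> carrier P" using a var_ideal_subset by blast
    from scalar_closedD(4)[OF W this \<open>h \<in> ?W\<close>] show ?thesis using True by simp
  next
    case False
    then have "x \<in> H" using x by simp
    moreover have "H \<subseteq> carrier M" using H(2) by simp
    ultimately have "a \<odot>\<^bsub>M\<^esub> x \<in> lin_span var_ideal H"
      using smult_mem_lin_span[OF H(1) _ submonoid_var_ideal _ a] by simp
    then show ?thesis using HW by blast
  qed
  then have "lin_span var_ideal (insert h H) \<subseteq> ?W"
    using H(1) by (intro lin_span_least[OF _ W]) auto
  then show ?thesis using LW by (intro set_add_least[OF W])
qed

lemma nakayama: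
  assumes L: "P_submodule L" and H: "finite H" "H \<subseteq> carrier M"
    and gen: "H \<subseteq> lin_span var_ideal H <+>\<^bsub>M\<^esub> L"
  shows "H \<subseteq> L"
proof -
  have "G \<subseteq> L" if "H \<subseteq> G" "G \<subseteq> lin_span var_ideal H <+>\<^bsub>M\<^esub> L" for G
    using H that
  proof (induction H arbitrary: G rule: finite_induct)
    case empty
    show ?case
    proof
      fix g assume "g \<in> G"
      then obtain z l where zl: "z \<in> {\<zero>\<^bsub>M\<^esub>}" "l \<in> L" "g = z \<oplus>\<^bsub>M\<^esub> l"
        using empty by (auto simp: lin_span_empty elim!: set_add_memE)
      moreover have "l \<in> carrier M" using zl(2) scalar_closedD(1)[OF L] by blast
      ultimately show "g \<in> L" by simp
    qed
  next
    case (insert h H)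
    have "h \<in> lin_span var_ideal (insert h H) <+>\<^bsub>M\<^esub> L" using insert.prems(2,3) by blast
    then have "lin_span var_ideal (insert h H) <+>\<^bsub>M\<^esub> L \<subseteq> lin_span var_ideal H <+>\<^bsub>M\<^esub> L"
      by (rule nakayama_step[OF L insert.hyps(1) insert.prems(1) insert.hyps(2)])
    with insert.prems(3) have "G \<subseteq> lin_span var_ideal H <+>\<^bsub>M\<^esub> L" by (rule subset_trans)
    moreover have "H \<subseteq> carrier M" "H \<subseteq> G" using insert.prems(1,2) by auto
    ultimately show ?case using insert.IH by blast
  qed
  then show ?thesis using gen by blast
qed

end

locale fg_ps_module = ps_module s M
  for s :: nat and M :: "(((nat \<Rightarrow> nat) \<Rightarrow> 'k::field poly), 'm) module" +
  fixes A :: "'m set"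
  assumes finite_generators: "finite A" and generators_in_carrier: "A \<subseteq> carrier M"
    and generates: "carrier M \<subseteq> lin_span (carrier (PS s)) A"
begin

section \<open>The filtration by powers of the ideal of the variables\<close>

text \<open>\<open>filtration k\<close> is \<open>m\<^sup>k M\<close> for the ideal \<open>m\<close> of the variables, generated by the
  products of \<open>k\<close> variables with the generators of \<open>M\<close>.\<close>

primrec gens :: "nat \<Rightarrow> 'm set" where
  "gens 0 = A"
| "gens (Suc k) = (\<lambda>(i, g). ps_var i \<odot>\<^bsub>M\<^esub> g) ` ({..<s} \<times> gens k)"

definition filtration :: "nat \<Rightarrow> 'm set" where
  "filtration k = lin_span (carrier P) (gens k)"

definition low_gens :: "nat \<Rightarrow> 'm set" where
  "low_gens n = (\<Union>k\<le>n. gens k)"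

lemma finite_gens: "finite (gens k)" "gens k \<subseteq> carrier M"
proof (induction k)
  case (Suc k)
  then show "finite (gens (Suc k))" by simp
  show "gens (Suc k) \<subseteq> carrier M" using Suc ps_var_in_carrier by auto
qed (use finite_generators generators_in_carrier in simp_all)

lemma finite_low_gens: "finite (low_gens n)" "low_gens n \<subseteq> carrier M"
  using finite_gens by (auto simp: low_gens_def)

lemma P_submodule_filtration: "P_submodule (filtration k)"
  unfolding filtration_def using finite_gens by (rule P_submodule_P_span)

lemma gens_subset_filtration: "gens k \<subseteq> filtration k"
proof
  fix g assume g: "g \<in> gens k"
  then have "\<one>\<^bsub>P\<^esub> \<odot>\<^bsub>M\<^esub> g \<in> filtration k"
    unfolding filtration_def using finite_gens by (intro smult_mem_lin_span[OF _ _ submonoid_carrier]) auto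
  moreover have "g \<in> carrier M" using g finite_gens(2) by blast
  ultimately show "g \<in> filtration k" by simp
qed

lemma filtration_Suc_subset: "filtration (Suc k) \<subseteq> filtration k"
  unfolding filtration_def[of "Suc k"]
proof (rule lin_span_least[OF _ P_submodule_filtration])
  fix x a assume x: "x \<in> gens (Suc k)" and a: "a \<in> carrier P"
  then obtain i g where ig: "i < s" "g \<in> gens k" "x = ps_var i \<odot>\<^bsub>M\<^esub> g" by auto
  then have "x \<in> filtration k"
    using scalar_closedD(4)[OF P_submodule_filtration ps_var_in_carrier[OF ig(1)]
        subsetD[OF gens_subset_filtration ig(2)]] by simp
  then show "a \<odot>\<^bsub>M\<^esub> x \<in> filtration k" by (rule scalar_closedD(4)[OF P_submodule_filtration a])
qed (use finite_gens in simp)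

lemma filtration_Suc_subset_var_ideal_span: "filtration (Suc k) \<subseteq> lin_span var_ideal (gens k)"
  unfolding filtration_def
proof (rule lin_span_least[OF _ P_submodule_var_ideal_span[OF finite_gens]])
  fix x a assume x: "x \<in> gens (Suc k)" and a: "a \<in> carrier P"
  then obtain i g where ig: "i < s" "g \<in> gens k" "x = ps_var i \<odot>\<^bsub>M\<^esub> g" by auto
  moreover have "g \<in> carrier M" using ig(2) finite_gens(2) by blast
  ultimately have "a \<odot>\<^bsub>M\<^esub> x = (a \<otimes>\<^bsub>P\<^esub> ps_var i) \<odot>\<^bsub>M\<^esub> g"
    using a ps_var_in_carrier[OF ig(1)] by (simp add: smult_assoc1)
  moreover have "a \<otimes>\<^bsub>P\<^esub> ps_var i \<in> var_ideal" using a ig(1) by (intro var_ideal_mult ps_var_in_var_ideal)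
  ultimately show "a \<odot>\<^bsub>M\<^esub> x \<in> lin_span var_ideal (gens k)"
    using smult_mem_lin_span[OF finite_gens submonoid_var_ideal ig(2)] by simp
qed (use finite_gens in simp)

lemma filtration_subset_Kt_span:
  "filtration k \<subseteq> lin_span Kt_scalars (gens k) <+>\<^bsub>M\<^esub> filtration (Suc k)"
proof -
  let ?W = "lin_span Kt_scalars (gens k) <+>\<^bsub>M\<^esub> filtration (Suc k)"
  have W: "K_subspace ?W"
    using K_subspace_Kt_span[OF finite_gens] K_subspace_if_P_submodule[OF P_submodule_filtration]
    by (rule scalar_closed_set_add) simp
  show ?thesis
    unfolding filtration_def[of k]
  proof (rule lin_span_least[OF finite_gens(1) W])
    fix g a assume g: "g \<in> gens k" and a: "a \<in> carrier P"
    have gc: "g \<in> carrier M" using g finite_gens by blast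
    let ?d = "\<lambda>i. ps_div_var s a i"
    have d: "?d i \<in> carrier P" for i by (simp add: PS_simps)
    \<comment> \<open>Split off the constant term: \<open>a = a(0) + \<Sum>\<^sub>i x\<^sub>i d\<^sub>i\<close>.\<close>
    have "(\<Oplus>\<^bsub>P\<^esub>i\<in>{..<s}. ps_var i \<otimes>\<^bsub>P\<^esub> ?d i) \<odot>\<^bsub>M\<^esub> g
        = (\<Oplus>\<^bsub>M\<^esub>i\<in>{..<s}. (ps_var i \<otimes>\<^bsub>P\<^esub> ?d i) \<odot>\<^bsub>M\<^esub> g)"
      using d ps_var_in_carrier gc by (intro finsum_smult_rdistr) auto
    also have "\<dots> = (\<Oplus>\<^bsub>M\<^esub>i\<in>{..<s}. ?d i \<odot>\<^bsub>M\<^esub> (ps_var i \<odot>\<^bsub>M\<^esub> g))"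
    proof (rule M.finsum_cong')
      show "(ps_var i \<otimes>\<^bsub>P\<^esub> ?d i) \<odot>\<^bsub>M\<^esub> g = ?d i \<odot>\<^bsub>M\<^esub> (ps_var i \<odot>\<^bsub>M\<^esub> g)" if "i \<in> {..<s}" for i
        using d[of i] ps_var_in_carrier[of i] that gc by (simp add: R.m_comm[of "ps_var i"] smult_assoc1)
    qed (use d ps_var_in_carrier gc in auto)
    also have "\<dots> \<in> filtration (Suc k)"
    proof (intro scalar_closed_finsum[OF P_submodule_filtration] Pi_I)
      fix i assume "i \<in> {..<s}"
      then have "ps_var i \<odot>\<^bsub>M\<^esub> g \<in> gens (Suc k)" using g by force
      then have "ps_var i \<odot>\<^bsub>M\<^esub> g \<in> filtration (Suc k)" using gens_subset_filtration by blast
      then show "?d i \<odot>\<^bsub>M\<^esub> (ps_var i \<odot>\<^bsub>M\<^esub> g) \<in> filtration (Suc k)"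
        by (rule scalar_closedD(4)[OF P_submodule_filtration d])
    qed simp
    finally have high: "(\<Oplus>\<^bsub>P\<^esub>i\<in>{..<s}. ps_var i \<otimes>\<^bsub>P\<^esub> ?d i) \<odot>\<^bsub>M\<^esub> g \<in> filtration (Suc k)" .
    have low: "ps_poly (a exp0) \<odot>\<^bsub>M\<^esub> g \<in> lin_span Kt_scalars (gens k)"
      using finite_gens g by (intro smult_mem_lin_span[OF _ _ submonoid_Kt_scalars]) auto
    have "a \<odot>\<^bsub>M\<^esub> g = ps_poly (a exp0) \<odot>\<^bsub>M\<^esub> g \<oplus>\<^bsub>M\<^esub> (\<Oplus>\<^bsub>P\<^esub>i\<in>{..<s}. ps_var i \<otimes>\<^bsub>P\<^esub> ?d i) \<odot>\<^bsub>M\<^esub> g"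
      using d ps_var_in_carrier gc
      by (subst ps_decomposition[OF a]) (auto intro!: smult_l_distr R.finsum_closed)
    then show "a \<odot>\<^bsub>M\<^esub> g \<in> ?W" using set_add_memI[OF low high] by simp
  qed
qed

lemma carrier_subset_low_gens_span:
  "carrier M \<subseteq> lin_span Kt_scalars (low_gens n) <+>\<^bsub>M\<^esub> filtration (Suc n)"
proof (induction n)
  case 0
  have "carrier M \<subseteq> filtration 0" using generates by (simp add: filtration_def)
  then show ?case using filtration_subset_Kt_span[of 0] by (simp add: low_gens_def)
next
  case (Suc n)
  let ?W = "lin_span Kt_scalars (low_gens (Suc n)) <+>\<^bsub>M\<^esub> filtration (Suc (Suc n))"
  have W: "K_subspace ?W"
    using K_subspace_Kt_span[OF finite_low_gens] K_subspace_if_P_submodule[OF P_submodule_filtration]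
    by (rule scalar_closed_set_add) simp
  have low: "low_gens n \<subseteq> low_gens (Suc n)" "gens (Suc n) \<subseteq> low_gens (Suc n)"
    unfolding low_gens_def by (fastforce simp del: gens.simps)+
  have "lin_span Kt_scalars (low_gens (Suc n)) \<subseteq> ?W"
    by (rule set_add_upper_left[OF scalar_closedD(1)[OF K_subspace_Kt_span[OF finite_low_gens]]
          scalar_closedD(2)[OF P_submodule_filtration]])
  with lin_span_mono[OF low(1) finite_low_gens submonoid_Kt_scalars]
  have "lin_span Kt_scalars (low_gens n) \<subseteq> ?W" by (rule subset_trans)
  moreover have "filtration (Suc n) \<subseteq> ?W"
    using filtration_subset_Kt_span[of "Suc n"]
      set_add_mono[OF lin_span_mono[OF low(2) finite_low_gens submonoid_Kt_scalars] order_refl]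
    by (rule subset_trans)
  ultimately have "lin_span Kt_scalars (low_gens n) <+>\<^bsub>M\<^esub> filtration (Suc n) \<subseteq> ?W"
    by (rule set_add_least[OF W])
  with Suc.IH show ?case by (rule subset_trans)
qed

lemma filtration_subset_tsub_if_stable:
  assumes "filtration k <+>\<^bsub>M\<^esub> tsub M t0 \<subseteq> filtration (Suc k) <+>\<^bsub>M\<^esub> tsub M t0"
  shows "filtration k \<subseteq> tsub M t0"
proof -
  have "gens k \<subseteq> filtration k <+>\<^bsub>M\<^esub> tsub M t0"
    using gens_subset_filtration set_add_upper_left[OF scalar_closedD(1)[OF P_submodule_filtration]
        scalar_closedD(2)[OF P_submodule_tsub]] by (rule subset_trans)
  also have "\<dots> \<subseteq> lin_span var_ideal (gens k) <+>\<^bsub>M\<^esub> tsub M t0"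
    using assms set_add_mono[OF filtration_Suc_subset_var_ideal_span order_refl] by (rule subset_trans)
  finally have "gens k \<subseteq> tsub M t0" by (rule nakayama[OF P_submodule_tsub finite_gens])
  then show ?thesis unfolding filtration_def
    using scalar_closedD(4)[OF P_submodule_tsub] by (intro lin_span_least[OF finite_gens(1) P_submodule_tsub]) auto
qed

lemma spans_fiber_if_spans_modulo_filtration:
  assumes S: "finite S" "S \<subseteq> carrier M" "card S \<le> n"
    and cov: "carrier M \<subseteq> lin_span K_scalars S <+>\<^bsub>M\<^esub> (filtration (Suc n) <+>\<^bsub>M\<^esub> tsub M t0)"
  shows "spans_fiber M t0 S"
proof -
  define Z where "Z j = filtration j <+>\<^bsub>M\<^esub> tsub M t0" for j
  have Z: "K_subspace (Z j)" for j
    unfolding Z_def using P_submodule_filtration P_submodule_tsub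
    by (intro K_subspace_if_P_submodule scalar_closed_set_add) auto
  have dec: "Z (Suc j) \<subseteq> Z j" for j
    unfolding Z_def using filtration_Suc_subset by (rule set_add_mono) simp
  have "Z 0 \<subseteq> lin_span K_scalars S <+>\<^bsub>M\<^esub> Z (Suc n)"
    using cov scalar_closedD(1)[OF Z] by (auto simp: Z_def)
  then obtain k where k: "k \<le> n" "Z k \<subseteq> Z (Suc k)"
    using K_subspace_chain_stabilizes[of Z, OF Z dec S] by blast
  \<comment> \<open>A stable step of the chain is killed by Nakayama, and the chain decreases.\<close>
  then have "filtration k \<subseteq> tsub M t0" unfolding Z_def by (intro filtration_subset_tsub_if_stable) simp
  then have "Z k \<subseteq> tsub M t0" unfolding Z_def by (rule set_add_least[OF P_submodule_tsub _ order_refl])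
  moreover have "Z (Suc n) \<subseteq> Z k" using lift_Suc_antimono_le[of Z, OF dec] k(1) by simp
  ultimately have "carrier M \<subseteq> lin_span K_scalars S <+>\<^bsub>M\<^esub> tsub M t0"
    using cov set_add_mono[OF order_refl, of "Z (Suc n)" "tsub M t0" "lin_span K_scalars S"]
    by (auto simp: Z_def)
  then show ?thesis using S by (simp add: spans_fiber_iff)
qed

end

section \<open>Spanning sets of nearby fibers\<close>

text \<open>The relations among the generators outside a spanning set, \<open>I - (t - t\<^sub>o) Q\<close>; at
  \<open>t = t\<^sub>o\<close> it is the identity, so its determinant does not vanish near \<open>t\<^sub>o\<close>.\<close>

definition relation_mat :: "'k::field \<Rightarrow> ('m \<Rightarrow> 'm \<Rightarrow> 'k poly) \<Rightarrow> 'm list \<Rightarrow> 'k poly mat" where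
  "relation_mat t\<^sub>o q xs = mat (length xs) (length xs)
     (\<lambda>(i, j). (if i = j then 1 else 0) - [:- t\<^sub>o, 1:] * q (xs ! i) (xs ! j))"

lemma poly_det_relation_mat: "poly (det (relation_mat t\<^sub>o q xs)) t0 = det (map_mat (\<lambda>p. poly p t0) (relation_mat t\<^sub>o q xs))"
proof -
  interpret comm_ring_hom "\<lambda>p. poly p t0" by unfold_locales auto
  show ?thesis by simp
qed

lemma poly_det_relation_mat_base: "poly (det (relation_mat t\<^sub>o q xs)) t\<^sub>o = 1"
proof -
  have "map_mat (\<lambda>p. poly p t\<^sub>o) (relation_mat t\<^sub>o q xs) = 1\<^sub>m (length xs)"
    by (rule eq_matI) (auto simp: relation_mat_def)
  then show ?thesis by (simp add: poly_det_relation_mat)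
qed

context ps_module
begin

lemma Kt_span_subset:
  assumes "finite X" "X \<subseteq> carrier M"
  shows "lin_span Kt_scalars X \<subseteq> lin_span K_scalars X <+>\<^bsub>M\<^esub> tsub M t0"
proof
  fix y assume y: "y \<in> lin_span Kt_scalars X"
  obtain q where "y = (\<Oplus>\<^bsub>M\<^esub>x\<in>X. ps_poly (q x) \<odot>\<^bsub>M\<^esub> x)"
    using lin_span_coeffs[OF y assms(2)] by auto
  with Kt_comb_eval[OF assms, of t0 q] obtain z where "z \<in> tsub M t0"
    "y = (\<Oplus>\<^bsub>M\<^esub>x\<in>X. ps_const (poly (q x) t0) \<odot>\<^bsub>M\<^esub> x) \<oplus>\<^bsub>M\<^esub> z"
    by blast
  then show "y \<in> lin_span K_scalars X <+>\<^bsub>M\<^esub> tsub M t0"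
    using set_add_memI[OF K_span_memI[OF assms] \<open>z \<in> tsub M t0\<close>] by simp
qed

lemma Kt_comb_smult:
  assumes "finite X" "X \<subseteq> carrier M"
  shows "ps_poly r \<odot>\<^bsub>M\<^esub> (\<Oplus>\<^bsub>M\<^esub>x\<in>X. ps_poly (q x) \<odot>\<^bsub>M\<^esub> x) = (\<Oplus>\<^bsub>M\<^esub>x\<in>X. ps_poly (r * q x) \<odot>\<^bsub>M\<^esub> x)"
proof -
  have "ps_poly r \<odot>\<^bsub>M\<^esub> (\<Oplus>\<^bsub>M\<^esub>x\<in>X. ps_poly (q x) \<odot>\<^bsub>M\<^esub> x)
      = (\<Oplus>\<^bsub>M\<^esub>x\<in>X. ps_poly r \<odot>\<^bsub>M\<^esub> (ps_poly (q x) \<odot>\<^bsub>M\<^esub> x))"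
    using assms by (intro finsum_smult_ldistr) auto
  also have "\<dots> = (\<Oplus>\<^bsub>M\<^esub>x\<in>X. ps_poly (r * q x) \<odot>\<^bsub>M\<^esub> x)"
    using assms(2) by (intro M.finsum_cong') (auto simp: ps_poly_smult_smult)
  finally show ?thesis .
qed

lemma K_comb_reindex_nth:
  assumes "distinct xs" "set xs \<subseteq> carrier M"
  shows "(\<Oplus>\<^bsub>M\<^esub>x\<in>set xs. ps_const (c x) \<odot>\<^bsub>M\<^esub> x)
       = (\<Oplus>\<^bsub>M\<^esub>j\<in>{..<length xs}. ps_const (c (xs ! j)) \<odot>\<^bsub>M\<^esub> xs ! j)"
proof -
  have "(\<Oplus>\<^bsub>M\<^esub>x\<in>(!) xs ` {..<length xs}. ps_const (c x) \<odot>\<^bsub>M\<^esub> x)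
      = (\<Oplus>\<^bsub>M\<^esub>j\<in>{..<length xs}. ps_const (c (xs ! j)) \<odot>\<^bsub>M\<^esub> xs ! j)"
    using assms by (intro M.finsum_reindex) (auto simp: inj_on_nth set_conv_nth)
  moreover have "(!) xs ` {..<length xs} = set xs" by (auto simp: set_conv_nth)
  ultimately show ?thesis by simp
qed

lemma deformation_representation:
  assumes E: "finite E" "E \<subseteq> carrier M"
    and ES: "E \<subseteq> lin_span K_scalars S <+>\<^bsub>M\<^esub> (N <+>\<^bsub>M\<^esub> tsub M t\<^sub>o)"
    and cov: "carrier M \<subseteq> lin_span Kt_scalars E <+>\<^bsub>M\<^esub> N"
  shows "\<exists>q. \<forall>e\<in>E. \<exists>k w w'. k \<in> lin_span K_scalars S \<and> w \<in> N \<and> w' \<in> N \<and>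
           e = k \<oplus>\<^bsub>M\<^esub> (w \<oplus>\<^bsub>M\<^esub> ps_t_minus t\<^sub>o \<odot>\<^bsub>M\<^esub> ((\<Oplus>\<^bsub>M\<^esub>x\<in>E. ps_poly (q e x) \<odot>\<^bsub>M\<^esub> x) \<oplus>\<^bsub>M\<^esub> w'))"
proof -
  have "\<exists>q k w w'. k \<in> lin_span K_scalars S \<and> w \<in> N \<and> w' \<in> N \<and>
           e = k \<oplus>\<^bsub>M\<^esub> (w \<oplus>\<^bsub>M\<^esub> ps_t_minus t\<^sub>o \<odot>\<^bsub>M\<^esub> ((\<Oplus>\<^bsub>M\<^esub>x\<in>E. ps_poly (q x) \<odot>\<^bsub>M\<^esub> x) \<oplus>\<^bsub>M\<^esub> w'))"
    if e: "e \<in> E" for e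
  proof -
    obtain k z where kz: "k \<in> lin_span K_scalars S" "z \<in> N <+>\<^bsub>M\<^esub> tsub M t\<^sub>o" "e = k \<oplus>\<^bsub>M\<^esub> z"
      using ES e by (blast elim: set_add_memE)
    obtain w t where wt: "w \<in> N" "t \<in> tsub M t\<^sub>o" "z = w \<oplus>\<^bsub>M\<^esub> t"
      using kz(2) by (rule set_add_memE)
    obtain m where m: "m \<in> carrier M" "t = ps_t_minus t\<^sub>o \<odot>\<^bsub>M\<^esub> m"
      using wt(2) unfolding tsub_def by blast
    obtain p w' where pw: "p \<in> lin_span Kt_scalars E" "w' \<in> N" "m = p \<oplus>\<^bsub>M\<^esub> w'"
      using cov m(1) by (blast elim: set_add_memE)
    obtain q where "p = (\<Oplus>\<^bsub>M\<^esub>x\<in>E. ps_poly (q x) \<odot>\<^bsub>M\<^esub> x)"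
      using lin_span_coeffs[OF pw(1) E(2)] by auto
    then show ?thesis using kz wt m pw
      by (intro exI[of _ q] exI[of _ k] exI[of _ w] exI[of _ w']) simp
  qed
  then have "\<forall>e\<in>E. \<exists>q k w w'. k \<in> lin_span K_scalars S \<and> w \<in> N \<and> w' \<in> N \<and>
           e = k \<oplus>\<^bsub>M\<^esub> (w \<oplus>\<^bsub>M\<^esub> ps_t_minus t\<^sub>o \<odot>\<^bsub>M\<^esub> ((\<Oplus>\<^bsub>M\<^esub>x\<in>E. ps_poly (q x) \<odot>\<^bsub>M\<^esub> x) \<oplus>\<^bsub>M\<^esub> w'))"
    by blast
  then show ?thesis by (rule bchoice)
qed

lemma K_span_set_add_submodule_tsub:
  fixes t0 :: 'k
  assumes "finite S" "S \<subseteq> carrier M" "P_submodule N"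
  defines "W \<equiv> lin_span K_scalars S <+>\<^bsub>M\<^esub> (N <+>\<^bsub>M\<^esub> tsub M t0)"
  shows "K_subspace W" "lin_span K_scalars S \<subseteq> W" "N \<subseteq> W" "tsub M t0 \<subseteq> W"
proof -
  have NT: "K_subspace (N <+>\<^bsub>M\<^esub> tsub M t0)"
    using assms(3) P_submodule_tsub by (intro K_subspace_if_P_submodule scalar_closed_set_add) auto
  have span: "K_subspace (lin_span K_scalars S)" using assms(1,2) by (rule K_subspace_K_span)
  show "K_subspace W" unfolding W_def using span NT by (rule scalar_closed_set_add) simp
  have NT_W: "N <+>\<^bsub>M\<^esub> tsub M t0 \<subseteq> W"
    unfolding W_def by (rule set_add_upper_right[OF scalar_closedD(1)[OF NT] scalar_closedD(2)[OF span]])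
  show "lin_span K_scalars S \<subseteq> W"
    unfolding W_def by (rule set_add_upper_left[OF scalar_closedD(1)[OF span] scalar_closedD(2)[OF NT]])
  show "N \<subseteq> W"
    using set_add_upper_left[OF scalar_closedD(1)[OF assms(3)] scalar_closedD(2)[OF P_submodule_tsub]] NT_W
    by (rule subset_trans)
  show "tsub M t0 \<subseteq> W"
    using set_add_upper_right[OF scalar_closedD(1)[OF P_submodule_tsub] scalar_closedD(2)[OF assms(3)]] NT_W
    by (rule subset_trans)
qed

lemma deformation_relation:
  assumes E: "finite E" "E \<subseteq> carrier M" "S \<subseteq> E" and N: "P_submodule N" and e: "e \<in> E - S"
    and k: "k \<in> lin_span K_scalars S" and w: "w \<in> N" "w' \<in> N"
    and e_eq: "e = k \<oplus>\<^bsub>M\<^esub> (w \<oplus>\<^bsub>M\<^esub> ps_t_minus t\<^sub>o \<odot>\<^bsub>M\<^esub> ((\<Oplus>\<^bsub>M\<^esub>x\<in>E. ps_poly (q x) \<odot>\<^bsub>M\<^esub> x) \<oplus>\<^bsub>M\<^esub> w'))"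
  shows "(\<Oplus>\<^bsub>M\<^esub>x\<in>E - S. ps_const ((if x = e then 1 else 0) - poly ([:- t\<^sub>o, 1:] * q x) t0) \<odot>\<^bsub>M\<^esub> x)
      \<in> lin_span K_scalars S <+>\<^bsub>M\<^esub> (N <+>\<^bsub>M\<^esub> tsub M t0)"
proof -
  let ?T = "tsub M t0" and ?F = "E - S"
  let ?W = "lin_span K_scalars S <+>\<^bsub>M\<^esub> (N <+>\<^bsub>M\<^esub> ?T)"
  let ?a = "\<lambda>x. poly ([:- t\<^sub>o, 1:] * q x) t0"
  have S: "finite S" "S \<subseteq> carrier M" using finite_subset[OF E(3,1)] E(2,3) by auto
  have F: "finite ?F" "?F \<subseteq> carrier M" using E(1,2) by auto
  note W = K_span_set_add_submodule_tsub[OF S N, of t0]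
  note Ws = scalar_closedD[OF W(1)]
  note K_W = W(2) and N_W = W(3) and T_W = W(4)
  \<comment> \<open>Evaluate \<open>(t - t\<^sub>o) q(x)\<close> at \<open>t0\<close>, up to an error in \<open>(t - t0) M\<close>.\<close>
  obtain z where z: "z \<in> ?T" "(\<Oplus>\<^bsub>M\<^esub>x\<in>E. ps_poly ([:- t\<^sub>o, 1:] * q x) \<odot>\<^bsub>M\<^esub> x)
       = (\<Oplus>\<^bsub>M\<^esub>x\<in>E. ps_const (?a x) \<odot>\<^bsub>M\<^esub> x) \<oplus>\<^bsub>M\<^esub> z"
    using Kt_comb_eval[OF E(1,2), of t0 "\<lambda>x. [:- t\<^sub>o, 1:] * q x"] by blast
  let ?sS = "\<Oplus>\<^bsub>M\<^esub>x\<in>S. ps_const (?a x) \<odot>\<^bsub>M\<^esub> x" and ?sF = "\<Oplus>\<^bsub>M\<^esub>x\<in>?F. ps_const (?a x) \<odot>\<^bsub>M\<^esub> x"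
  have E_eq: "E = S \<union> ?F" using E(3) by auto
  have "(\<Oplus>\<^bsub>M\<^esub>x\<in>E. ps_const (?a x) \<odot>\<^bsub>M\<^esub> x) = ?sS \<oplus>\<^bsub>M\<^esub> ?sF"
    using S F by (subst (1) E_eq, intro M.finsum_Un_disjoint) auto
  moreover have "ps_t_minus t\<^sub>o \<odot>\<^bsub>M\<^esub> (\<Oplus>\<^bsub>M\<^esub>x\<in>E. ps_poly (q x) \<odot>\<^bsub>M\<^esub> x)
       = (\<Oplus>\<^bsub>M\<^esub>x\<in>E. ps_poly ([:- t\<^sub>o, 1:] * q x) \<odot>\<^bsub>M\<^esub> x)"
    unfolding ps_t_minus_eq by (rule Kt_comb_smult[OF E(1,2)])
  ultimately have t_sum: "ps_t_minus t\<^sub>o \<odot>\<^bsub>M\<^esub> (\<Oplus>\<^bsub>M\<^esub>x\<in>E. ps_poly (q x) \<odot>\<^bsub>M\<^esub> x) = ?sS \<oplus>\<^bsub>M\<^esub> ?sF \<oplus>\<^bsub>M\<^esub> z"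
    using z(2) by simp
  have sS: "?sS \<in> carrier M" "?sS \<in> ?W" using K_span_memI[OF S] K_W S(2) by (auto intro: K_comb_closed)
  have sF: "?sF \<in> carrier M" using F(2) by (auto intro: K_comb_closed)
  have zc: "z \<in> carrier M" using z(1) scalar_closedD(1)[OF P_submodule_tsub] by blast
  have wc: "w \<in> carrier M" "w' \<in> carrier M" using w scalar_closedD(1)[OF N] by auto
  have kc: "k \<in> carrier M" using k K_W Ws(1) by blast
  have tw': "ps_t_minus t\<^sub>o \<odot>\<^bsub>M\<^esub> w' \<in> N" using scalar_closedD(4)[OF N _ w(2)] by simp
  define w0 where "w0 = k \<oplus>\<^bsub>M\<^esub> (w \<oplus>\<^bsub>M\<^esub> (?sS \<oplus>\<^bsub>M\<^esub> (z \<oplus>\<^bsub>M\<^esub> ps_t_minus t\<^sub>o \<odot>\<^bsub>M\<^esub> w')))"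
  have w0: "w0 \<in> ?W" "w0 \<in> carrier M"
    using k K_W w N_W z T_W sS tw' Ws(1) unfolding w0_def by (auto intro!: Ws(3))
  have "(\<Oplus>\<^bsub>M\<^esub>x\<in>E. ps_poly (q x) \<odot>\<^bsub>M\<^esub> x) \<in> carrier M" using E(2) by (intro M.finsum_closed) auto
  then have "ps_t_minus t\<^sub>o \<odot>\<^bsub>M\<^esub> ((\<Oplus>\<^bsub>M\<^esub>x\<in>E. ps_poly (q x) \<odot>\<^bsub>M\<^esub> x) \<oplus>\<^bsub>M\<^esub> w')
      = (?sS \<oplus>\<^bsub>M\<^esub> ?sF \<oplus>\<^bsub>M\<^esub> z) \<oplus>\<^bsub>M\<^esub> ps_t_minus t\<^sub>o \<odot>\<^bsub>M\<^esub> w'"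
    by (simp only: smult_r_distr[OF ps_t_minus_in_carrier _ wc(2)] t_sum)
  note e_eq[unfolded this]
  then have e_w0: "e = w0 \<oplus>\<^bsub>M\<^esub> ?sF"
    unfolding w0_def using kc wc sS(1) sF zc by (simp add: M.a_ac)
  have e_carrier: "e \<in> carrier M" using e E(2) by blast
  have F_id: "(\<lambda>x. x) \<in> ?F \<rightarrow> carrier M" using F(2) by auto
  have "(\<Oplus>\<^bsub>M\<^esub>x\<in>?F. ps_const ((if x = e then 1 else 0) - ?a x) \<odot>\<^bsub>M\<^esub> x)
      = (\<Oplus>\<^bsub>M\<^esub>x\<in>?F. ps_const (if x = e then 1 else 0) \<odot>\<^bsub>M\<^esub> x)
        \<oplus>\<^bsub>M\<^esub> (\<Oplus>\<^bsub>M\<^esub>x\<in>?F. ps_const (- 1 * ?a x) \<odot>\<^bsub>M\<^esub> x)"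
    by (simp only: K_comb_add[OF F_id] diff_conv_add_uminus mult_minus1)
  also have "\<dots> = e \<oplus>\<^bsub>M\<^esub> \<ominus>\<^bsub>M\<^esub> ?sF"
    by (simp only: K_comb_delta[OF F(1) F_id e] ps_const_smult_one[OF e_carrier]
        K_comb_smult[OF F(1) F_id, symmetric] ps_const_smult_minus_one[OF sF])
  also have "\<dots> = w0" using e_w0 w0(2) sF by (simp add: M.a_assoc M.r_neg)
  finally show ?thesis using w0(1) by simp
qed

lemma subset_K_span_if_det_nonzero:
  assumes E: "finite E" "E \<subseteq> carrier M" "S \<subseteq> E" and N: "P_submodule N"
    and xs: "distinct xs" "set xs = E - S"
    and rep: "\<forall>e\<in>E. \<exists>k w w'. k \<in> lin_span K_scalars S \<and> w \<in> N \<and> w' \<in> N \<and>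
           e = k \<oplus>\<^bsub>M\<^esub> (w \<oplus>\<^bsub>M\<^esub> ps_t_minus t\<^sub>o \<odot>\<^bsub>M\<^esub> ((\<Oplus>\<^bsub>M\<^esub>x\<in>E. ps_poly (q e x) \<odot>\<^bsub>M\<^esub> x) \<oplus>\<^bsub>M\<^esub> w'))"
    and det: "poly (det (relation_mat t\<^sub>o q xs)) t0 \<noteq> 0"
  shows "E \<subseteq> lin_span K_scalars S <+>\<^bsub>M\<^esub> (N <+>\<^bsub>M\<^esub> tsub M t0)"
proof -
  let ?W = "lin_span K_scalars S <+>\<^bsub>M\<^esub> (N <+>\<^bsub>M\<^esub> tsub M t0)"
  let ?A = "map_mat (\<lambda>p. poly p t0) (relation_mat t\<^sub>o q xs)"
  have S: "finite S" "S \<subseteq> carrier M" using finite_subset[OF E(3,1)] E(2,3) by auto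
  note W = K_span_set_add_submodule_tsub[OF S N, of t0]
  have xs_carrier: "set xs \<subseteq> carrier M" using xs(2) E(2) by blast
  have "set xs \<subseteq> ?W"
  proof (rule subset_if_invertible_relations[OF W(1) xs_carrier])
    show "?A \<in> carrier_mat (length xs) (length xs)" by (simp add: relation_mat_def)
    show "det ?A \<noteq> 0" using det by (simp add: poly_det_relation_mat)
    fix i assume i: "i < length xs"
    then have e: "xs ! i \<in> E - S" using xs(2) nth_mem by blast
    then obtain k w w' where kw: "k \<in> lin_span K_scalars S" "w \<in> N" "w' \<in> N"
        "xs ! i = k \<oplus>\<^bsub>M\<^esub> (w \<oplus>\<^bsub>M\<^esub> ps_t_minus t\<^sub>o \<odot>\<^bsub>M\<^esub>
           ((\<Oplus>\<^bsub>M\<^esub>x\<in>E. ps_poly (q (xs ! i) x) \<odot>\<^bsub>M\<^esub> x) \<oplus>\<^bsub>M\<^esub> w'))"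
      using rep by blast
    let ?c = "\<lambda>x. (if x = xs ! i then 1 else 0) - poly ([:- t\<^sub>o, 1:] * q (xs ! i) x) t0"
    have "(\<Oplus>\<^bsub>M\<^esub>x\<in>E - S. ps_const (?c x) \<odot>\<^bsub>M\<^esub> x) \<in> ?W"
      by (rule deformation_relation[OF E N e kw])
    moreover have "(\<Oplus>\<^bsub>M\<^esub>x\<in>E - S. ps_const (?c x) \<odot>\<^bsub>M\<^esub> x)
        = (\<Oplus>\<^bsub>M\<^esub>j\<in>{..<length xs}. ps_const (?A $$ (i, j)) \<odot>\<^bsub>M\<^esub> xs ! j)"
    proof -
      have "?c (xs ! j) = ?A $$ (i, j)" if "j < length xs" for j
        using i that nth_eq_iff_index_eq[OF xs(1) that i] by (simp add: relation_mat_def)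
      then show ?thesis
        unfolding xs(2)[symmetric] K_comb_reindex_nth[OF xs(1) xs_carrier]
        using xs_carrier by (intro M.finsum_cong') (auto dest: nth_mem)
    qed
    ultimately show "(\<Oplus>\<^bsub>M\<^esub>j\<in>{..<length xs}. ps_const (?A $$ (i, j)) \<odot>\<^bsub>M\<^esub> xs ! j) \<in> ?W"
      by simp
  qed
  moreover have "S \<subseteq> ?W" using mem_K_span_self[OF S] W(2) by blast
  ultimately show ?thesis using xs(2) by blast
qed

end

lemma fiber_dim_le:
  assumes "spans_fiber M t0 S" "card S \<le> m"
  shows "fiber_dim M t0 \<le> enat m"
proof -
  have "(LEAST n. \<exists>B. spans_fiber M t0 B \<and> card B = n) \<le> card S"
    using assms(1) by (intro Least_le) blast
  then show ?thesis using assms by (auto simp: fiber_dim_def)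
qed

lemma fiber_dim_attained:
  assumes "fiber_dim M t0 = enat n"
  obtains B where "spans_fiber M t0 B" "card B = n"
proof -
  have ex: "\<exists>B. spans_fiber M t0 B" using assms by (auto simp: fiber_dim_def split: if_splits)
  then have "n = (LEAST n. \<exists>B. spans_fiber M t0 B \<and> card B = n)"
    using assms by (simp add: fiber_dim_def)
  with ex show ?thesis using that LeastI_ex[of "\<lambda>n. \<exists>B. spans_fiber M t0 B \<and> card B = n"] by blast
qed

lemma zariski_open_A1_UNIV: "zariski_open_A1 UNIV"
  unfolding zariski_open_A1_def by (intro exI[of _ "{1}"]) auto

lemma zariski_open_A1_poly_nonzero: "zariski_open_A1 {x. poly D x \<noteq> 0}"
  unfolding zariski_open_A1_def by (intro exI[of _ "{D}"]) auto

context fg_ps_module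
begin

lemma spans_fiber_nearby:
  assumes B: "spans_fiber M t\<^sub>o B"
  shows "\<exists>D. poly D t\<^sub>o \<noteq> 0 \<and> (\<forall>t0. poly D t0 \<noteq> 0 \<longrightarrow> (\<exists>S. spans_fiber M t0 S \<and> card S \<le> card B))"
proof -
  define n where "n = card B"
  define E where "E = low_gens n"
  define N where "N = filtration (Suc n)"
  have E: "finite E" "E \<subseteq> carrier M" using finite_low_gens by (simp_all add: E_def)
  have N: "P_submodule N" by (simp add: N_def P_submodule_filtration)
  have Z: "K_subspace (N <+>\<^bsub>M\<^esub> tsub M t\<^sub>o)"
    using N P_submodule_tsub by (intro K_subspace_if_P_submodule scalar_closed_set_add) auto
  have B': "finite B" "B \<subseteq> carrier M" using B by (simp_all add: spans_fiber_iff)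
  have "carrier M \<subseteq> lin_span K_scalars B <+>\<^bsub>M\<^esub> tsub M t\<^sub>o" using B by (simp add: spans_fiber_iff)
  also have "\<dots> \<subseteq> lin_span K_scalars B <+>\<^bsub>M\<^esub> (N <+>\<^bsub>M\<^esub> tsub M t\<^sub>o)"
    by (intro set_add_mono order_refl set_add_upper_right scalar_closedD(1)[OF P_submodule_tsub]
        scalar_closedD(2)[OF N])
  finally obtain S where S: "S \<subseteq> E" "E \<subseteq> lin_span K_scalars S <+>\<^bsub>M\<^esub> (N <+>\<^bsub>M\<^esub> tsub M t\<^sub>o)" "card S \<le> n"
    using exists_small_K_spanning_subset[OF Z B' _ E] unfolding n_def by blast
  have S': "finite S" "S \<subseteq> carrier M" using finite_subset[OF S(1) E(1)] S(1) E(2) by auto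
  have cov: "carrier M \<subseteq> lin_span Kt_scalars E <+>\<^bsub>M\<^esub> N"
    unfolding E_def N_def by (rule carrier_subset_low_gens_span)
  obtain q where rep: "\<forall>e\<in>E. \<exists>k w w'. k \<in> lin_span K_scalars S \<and> w \<in> N \<and> w' \<in> N \<and>
      e = k \<oplus>\<^bsub>M\<^esub> (w \<oplus>\<^bsub>M\<^esub> ps_t_minus t\<^sub>o \<odot>\<^bsub>M\<^esub> ((\<Oplus>\<^bsub>M\<^esub>x\<in>E. ps_poly (q e x) \<odot>\<^bsub>M\<^esub> x) \<oplus>\<^bsub>M\<^esub> w'))"
    using deformation_representation[OF E S(2) cov] by blast
  obtain xs where xs: "distinct xs" "set xs = E - S" using finite_distinct_list[of "E - S"] E(1) by auto
  define D where "D = det (relation_mat t\<^sub>o q xs)"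
  show ?thesis
  proof (intro exI[of _ D] conjI allI impI)
    show "poly D t\<^sub>o \<noteq> 0" by (simp add: D_def poly_det_relation_mat_base)
    fix t0 assume "poly D t0 \<noteq> 0"
    let ?W = "lin_span K_scalars S <+>\<^bsub>M\<^esub> (N <+>\<^bsub>M\<^esub> tsub M t0)"
    note W = K_span_set_add_submodule_tsub[OF S' N, of t0]
    have "E \<subseteq> ?W" using \<open>poly D t0 \<noteq> 0\<close> unfolding D_def
      by (rule subset_K_span_if_det_nonzero[OF E S(1) N xs rep])
    then have "lin_span K_scalars E <+>\<^bsub>M\<^esub> tsub M t0 \<subseteq> ?W"
      using W(1,4) E(1) by (intro K_span_set_add_least)
    with Kt_span_subset[OF E] have "lin_span Kt_scalars E \<subseteq> ?W" by (rule subset_trans)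
    then have "lin_span Kt_scalars E <+>\<^bsub>M\<^esub> N \<subseteq> ?W" using W(3) by (rule set_add_least[OF W(1)])
    with cov have "carrier M \<subseteq> ?W" by (rule subset_trans)
    then have "spans_fiber M t0 S"
      using spans_fiber_if_spans_modulo_filtration[OF S' S(3)] by (simp add: N_def)
    then show "\<exists>S. spans_fiber M t0 S \<and> card S \<le> card B" using S(3) by (auto simp: n_def)
  qed
qed


lemma fiber_dim_bounded_nearby:
  assumes "fiber_dim M t\<^sub>o = enat n"
  shows "\<exists>D. poly D t\<^sub>o \<noteq> 0 \<and> (\<forall>t0. poly D t0 \<noteq> 0 \<longrightarrow> fiber_dim M t0 \<le> enat n)"
proof -
  obtain B where B: "spans_fiber M t\<^sub>o B" "card B = n" using assms by (rule fiber_dim_attained)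
  then obtain D where "poly D t\<^sub>o \<noteq> 0" "\<forall>t0. poly D t0 \<noteq> 0 \<longrightarrow> (\<exists>S. spans_fiber M t0 S \<and> card S \<le> n)"
    using spans_fiber_nearby by blast
  then show ?thesis using fiber_dim_le by blast
qed

end

theorem mainTheorem6:
  fixes s :: nat
    and M :: "(((nat \<Rightarrow> nat) \<Rightarrow> 'k::field poly), 'm) module"
    and t_o :: 'k
  assumes "Module.module (PS s) M"
    and "fin_gen_module s M"
  shows "\<exists>U. zariski_open_A1 U \<and> t_o \<in> U \<and> (\<forall>t0\<in>U. fiber_dim M t0 \<le> fiber_dim M t_o)"
proof -
  interpret ps_module s M by (rule ps_module.intro) (rule assms(1))
  obtain A where "finite A" "A \<subseteq> carrier M" "carrier M \<subseteq> lin_span (carrier P) A"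
    using fin_gen_module_generators[OF assms(2)] .
  then interpret fg_ps_module s M A by unfold_locales
  show ?thesis
  proof (cases "fiber_dim M t_o")
    case (enat n)
    then obtain D where "poly D t_o \<noteq> 0" "\<forall>t0. poly D t0 \<noteq> 0 \<longrightarrow> fiber_dim M t0 \<le> enat n"
      using fiber_dim_bounded_nearby by blast
    then show ?thesis
      using enat zariski_open_A1_poly_nonzero[of D] by (intro exI[of _ "{x. poly D x \<noteq> 0}"]) auto
  next
    case infinity
    then show ?thesis using zariski_open_A1_UNIV by auto
  qed
qed

end
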